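(* Let $M^n$ be a smooth orientable $n$-manifold with boundary and $F:M^n\rightarrow\mathbb{R}^{n+1}$ a smooth minimal immersed hypersurface with free boundary on the unit sphere $\mathbb{S}^n$, i.e. $F(\partial M^n)=F(M^n)\cap\mathbb{S}^n$ and $\langle\nu^M,\nu^{\mathbb{S}^n}\rangle=0$ on $F(\partial M^n)$, with $\nu^M$ a unit normal of $F$ and $\nu^{\mathbb{S}^n}$ the outer unit normal of $\mathbb{S}^n$. At a boundary point, choose an orthonormal basis $\tau_1,\dots,\tau_n$ of the tangent space of $M$ with $\tau_1,\dots,\tau_{n-1}$ tangent to $\partial M$ (hence to $\mathbb{S}^n$), diagonalising the second fundamental form $h_{ij}=A(\tau_i,\tau_j)$ of $M$, and $\tau_n=\nu^{\mathbb{S}^n}$. Then at every boundary point \[\nabla_n|A|^2 = -2|A|^2-2n\,h_{nn}^2,\] where $\nabla_n$ denotes the derivative in the direction $\tau_n$.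
   Context: $A$ is the second fundamental form of $M=F(M^n)$ with components $h_{ij}$, and $|A|^2=\sum_{i,j}h_{ij}^2$. *)

theory Defs
  imports "HOL-Analysis.Analysis"
begin

text \<open>Local (chart) model of an immersed hypersurface F of an n-manifold with boundary
  into R^(n+1).  The domain is an open set U of R^n (index type 'n), the manifold
  with boundary corresponds to the half space part {x. x $ k \<le> 0}, its boundary to
  {x. x $ k = 0}.\<close>

fun pd :: "(real^'n \<Rightarrow> real^'m) \<Rightarrow> (real^'n) list \<Rightarrow> real^'n \<Rightarrow> real^'m" where
  "pd f [] = f"
| "pd f (v # vs) = (\<lambda>x. frechet_derivative (pd f vs) (at x) v)"

definition smooth_on :: "(real^'n) set \<Rightarrow> (real^'n \<Rightarrow> real^'m) \<Rightarrow> bool" where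
  "smooth_on U f \<longleftrightarrow> (\<forall>vs. \<forall>x\<in>U. pd f vs differentiable (at x))"

definition dF :: "(real^'n \<Rightarrow> real^'m) \<Rightarrow> real^'n \<Rightarrow> 'n \<Rightarrow> real^'m" where
  "dF F x i = frechet_derivative F (at x) (axis i 1)"

definition metric :: "(real^'n \<Rightarrow> real^'m) \<Rightarrow> real^'n \<Rightarrow> real^'n^'n" where
  "metric F x = (\<chi> i j. dF F x i \<bullet> dF F x j)"

definition sff :: "(real^'n \<Rightarrow> real^'m) \<Rightarrow> (real^'n \<Rightarrow> real^'m) \<Rightarrow> real^'n \<Rightarrow> real^'n \<Rightarrow> real^'n \<Rightarrow> real" where
  "sff F N x u w = pd F [u, w] x \<bullet> N x"

definition sff_mat :: "(real^'n \<Rightarrow> real^'m) \<Rightarrow> (real^'n \<Rightarrow> real^'m) \<Rightarrow> real^'n \<Rightarrow> real^'n^'n" where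
  "sff_mat F N x = (\<chi> i j. sff F N x (axis i 1) (axis j 1))"

definition normA2 :: "(real^'n \<Rightarrow> real^'m) \<Rightarrow> (real^'n \<Rightarrow> real^'m) \<Rightarrow> real^'n \<Rightarrow> real" where
  "normA2 F N x = (let gi = matrix_inv (metric F x); h = sff_mat F N x in
     (\<Sum>i\<in>UNIV. \<Sum>j\<in>UNIV. \<Sum>k\<in>UNIV. \<Sum>l\<in>UNIV. gi$i$k * gi$j$l * h$i$j * h$k$l))"

definition mean_curv :: "(real^'n \<Rightarrow> real^'m) \<Rightarrow> (real^'n \<Rightarrow> real^'m) \<Rightarrow> real^'n \<Rightarrow> real" where
  "mean_curv F N x = (let gi = matrix_inv (metric F x); h = sff_mat F N x in
     (\<Sum>i\<in>UNIV. \<Sum>j\<in>UNIV. gi$i$j * h$i$j))"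

end

theory Submission
  imports Defs
begin

text \<open>At a boundary point p we compute in an orthonormal frame \<tau> of the tangent space made of an
  orthonormal basis of the boundary directions together with F p, the outer normal of the sphere,
  which is tangent to M by the free boundary condition; v is its coordinate vector.  In this
  frame the inverse metric is the identity and its derivative is minus the derivative of the
  metric, so the derivative of |A|^2 in direction v becomes a polynomial in the components of A,
  of the second derivatives of F against its first derivatives, and of the normal components of
  the third derivatives.  Differentiating |F| = 1 and \<langle>N, F\<rangle> = 0 along the boundary gives
  h(\<tau> i, \<tau> n) = 0, the second fundamental form -\<delta> of the sphere and the mixed third derivatives;
  differentiating the minimal surface equation in direction v determines the remaining normal
  third derivative.\<close>

lemma pd_snoc: "pd f (vs @ [z]) = pd (pd f [z]) vs"
  by (induction vs) auto

lemma smooth_on_pd: "smooth_on U f \<Longrightarrow> smooth_on U (pd f [z])"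
  unfolding smooth_on_def by (metis pd_snoc)

lemma smooth_on_has_derivative_pd:
  assumes "smooth_on U f" "x \<in> U"
  shows "(pd f vs has_derivative (\<lambda>u. pd f (u # vs) x)) (at x)"
  using assms frechet_derivative_works smooth_on_def by fastforce

lemma smooth_on_linear_pd:
  assumes "smooth_on U f" "x \<in> U"
  shows "linear (\<lambda>u. pd f (u # vs) x)"
  using smooth_on_has_derivative_pd[OF assms] has_derivative_linear by blast

lemma has_derivative_along_line:
  assumes "(\<phi> has_derivative \<phi>') (at (a + t *\<^sub>R b))"
  shows "((\<lambda>t. \<phi> (a + t *\<^sub>R b)) has_derivative (\<lambda>h. h *\<^sub>R \<phi>' b)) (at t within S)"
proof -
  have "((\<lambda>t. a + t *\<^sub>R b) has_derivative (\<lambda>h. h *\<^sub>R b)) (at t within S)"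
    by (auto intro!: derivative_eq_intros)
  from has_derivative_compose[OF this assms] show ?thesis
    using has_derivative_linear[OF assms] by (simp add: linear.scaleR)
qed

lemma second_difference_mean_value:
  fixes \<phi> :: "'a::real_normed_vector \<Rightarrow> real"
  assumes rect: "\<And>a b. a \<in> {0..s} \<Longrightarrow> b \<in> {0..s} \<Longrightarrow> x + a *\<^sub>R u + b *\<^sub>R w \<in> U"
    and s: "0 < s"
    and D1: "\<And>y. y \<in> U \<Longrightarrow> (\<phi> has_derivative (\<lambda>h. Da h y)) (at y)"
    and D2: "\<And>y. y \<in> U \<Longrightarrow> (Da u has_derivative (\<lambda>h. Db h y)) (at y)"
  obtains a b where "a \<in> {0..s}" "b \<in> {0..s}"
    "\<phi> (x + s *\<^sub>R u + s *\<^sub>R w) - \<phi> (x + s *\<^sub>R u) - \<phi> (x + s *\<^sub>R w) + \<phi> x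
       = s\<^sup>2 * Db w (x + a *\<^sub>R u + b *\<^sub>R w)"
proof -
  define \<psi> where "\<psi> t = \<phi> ((x + s *\<^sub>R w) + t *\<^sub>R u) - \<phi> (x + t *\<^sub>R u)" for t
  have "(\<psi> has_derivative (\<lambda>h. h * (Da u (x + t *\<^sub>R u + s *\<^sub>R w) - Da u (x + t *\<^sub>R u))))
          (at t within {0..s})" if "t \<in> {0..s}" for t
  proof -
    have "(x + s *\<^sub>R w) + t *\<^sub>R u \<in> U" "x + t *\<^sub>R u \<in> U"
      using rect[of t s] rect[of t 0] that s by (simp_all add: algebra_simps)
    from has_derivative_diff[OF has_derivative_along_line[OF D1[OF this(1)]]
                                has_derivative_along_line[OF D1[OF this(2)]]]
    show ?thesis unfolding \<psi>_def by (simp add: algebra_simps)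
  qed
  from mvt_very_simple[of 0 s \<psi>, OF _ this] s obtain a where a: "a \<in> {0..s}"
    and \<psi>_mvt: "\<psi> s - \<psi> 0 = s * (Da u (x + a *\<^sub>R u + s *\<^sub>R w) - Da u (x + a *\<^sub>R u))"
    by auto
  define \<eta> where "\<eta> r = Da u ((x + a *\<^sub>R u) + r *\<^sub>R w)" for r
  have "(\<eta> has_derivative (\<lambda>h. h * Db w (x + a *\<^sub>R u + r *\<^sub>R w))) (at r within {0..s})"
    if "r \<in> {0..s}" for r
  proof -
    have "(x + a *\<^sub>R u) + r *\<^sub>R w \<in> U" using rect[of a r] a that by (simp add: algebra_simps)
    then show ?thesis unfolding \<eta>_def using has_derivative_along_line[OF D2] by simp
  qed
  from mvt_very_simple[of 0 s \<eta>, OF _ this] s obtain b where b: "b \<in> {0..s}"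
    and \<eta>_mvt: "\<eta> s - \<eta> 0 = s * Db w (x + a *\<^sub>R u + b *\<^sub>R w)"
    by auto
  have "\<phi> (x + s *\<^sub>R u + s *\<^sub>R w) - \<phi> (x + s *\<^sub>R u) - \<phi> (x + s *\<^sub>R w) + \<phi> x = \<psi> s - \<psi> 0"
    unfolding \<psi>_def by (simp add: algebra_simps)
  also have "\<dots> = s * (\<eta> s - \<eta> 0)" using \<psi>_mvt unfolding \<eta>_def by (simp add: algebra_simps)
  also have "\<dots> = s\<^sup>2 * Db w (x + a *\<^sub>R u + b *\<^sub>R w)" using \<eta>_mvt by (simp add: power2_eq_square)
  finally show ?thesis using a b that by blast
qed

lemma dist_add_scaleR_le:
  assumes "a \<in> {0..s}" "b \<in> {0..s}"
  shows "dist (x + a *\<^sub>R u + b *\<^sub>R w) x \<le> s * (norm u + norm w)"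
proof -
  have "dist (x + a *\<^sub>R u + b *\<^sub>R w) x \<le> a * norm u + b * norm w"
    using assms norm_triangle_ineq[of "a *\<^sub>R u" "b *\<^sub>R w"] by (simp add: dist_norm)
  also have "\<dots> \<le> s * norm u + s * norm w"
    using assms by (intro add_mono mult_right_mono) auto
  finally show ?thesis by (simp add: distrib_left)
qed

lemma second_difference_quotient_tendsto:
  fixes \<phi> :: "'a::real_normed_vector \<Rightarrow> real"
  assumes U: "open U" "x \<in> U"
    and D1: "\<And>y. y \<in> U \<Longrightarrow> (\<phi> has_derivative (\<lambda>h. Da h y)) (at y)"
    and D2: "\<And>y. y \<in> U \<Longrightarrow> (Da u has_derivative (\<lambda>h. Db h y)) (at y)"
    and C: "continuous (at x) (Db w)"
  shows "((\<lambda>s. (\<phi> (x + s *\<^sub>R u + s *\<^sub>R w) - \<phi> (x + s *\<^sub>R u) - \<phi> (x + s *\<^sub>R w) + \<phi> x) / s\<^sup>2)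
           \<longlongrightarrow> Db w x) (at_right 0)"
proof (rule tendstoI)
  fix e :: real assume "e > 0"
  then obtain \<delta> where \<delta>: "\<delta> > 0" "\<And>y. dist y x < \<delta> \<Longrightarrow> dist (Db w y) (Db w x) < e"
    using C unfolding continuous_at_eps_delta by blast
  obtain r where r: "r > 0" "ball x r \<subseteq> U" using U open_contains_ball by blast
  define m where "m = min r \<delta>"
  define K where "K = norm u + norm w + 1"
  have "m > 0" "K > 0" using r \<delta> by (simp_all add: m_def K_def add_nonneg_pos)
  have near: "dist (x + a *\<^sub>R u + b *\<^sub>R w) x < m"
    if "s < m / K" "a \<in> {0..s}" "b \<in> {0..s}" for s a b
  proof -
    have "dist (x + a *\<^sub>R u + b *\<^sub>R w) x \<le> s * K"
      using dist_add_scaleR_le[OF that(2,3)] that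
      by (smt (verit) K_def atLeastAtMost_iff mult_left_mono)
    also have "\<dots> < m" using that \<open>K > 0\<close> by (simp add: pos_less_divide_eq mult.commute)
    finally show ?thesis .
  qed
  have "dist ((\<phi> (x + s *\<^sub>R u + s *\<^sub>R w) - \<phi> (x + s *\<^sub>R u) - \<phi> (x + s *\<^sub>R w) + \<phi> x) / s\<^sup>2)
          (Db w x) < e" if s: "0 < s" "s < m / K" for s
  proof -
    have "x + a *\<^sub>R u + b *\<^sub>R w \<in> U" if "a \<in> {0..s}" "b \<in> {0..s}" for a b
      using near[OF s(2) that] r m_def by (auto simp: dist_commute subset_iff)
    then obtain a b where ab: "a \<in> {0..s}" "b \<in> {0..s}" and eq:
      "\<phi> (x + s *\<^sub>R u + s *\<^sub>R w) - \<phi> (x + s *\<^sub>R u) - \<phi> (x + s *\<^sub>R w) + \<phi> x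
         = s\<^sup>2 * Db w (x + a *\<^sub>R u + b *\<^sub>R w)"
      using second_difference_mean_value[OF _ s(1) D1 D2] by metis
    show ?thesis using eq s \<delta>(2) near[OF s(2) ab] by (simp add: m_def)
  qed
  then show "\<forall>\<^sub>F s in at_right 0. dist ((\<phi> (x + s *\<^sub>R u + s *\<^sub>R w) - \<phi> (x + s *\<^sub>R u)
               - \<phi> (x + s *\<^sub>R w) + \<phi> x) / s\<^sup>2) (Db w x) < e"
    unfolding eventually_at_right_field using \<open>m > 0\<close> \<open>K > 0\<close> by (auto intro!: exI[of _ "m / K"])
qed

text \<open>Schwarz's theorem: the second difference quotient is symmetric in u and w, and tends to
  either mixed partial derivative.\<close>
lemma mixed_partials_commute:
  fixes \<phi> :: "'a::real_normed_vector \<Rightarrow> real"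
  assumes U: "open U" "x \<in> U"
    and D1: "\<And>y. y \<in> U \<Longrightarrow> (\<phi> has_derivative (\<lambda>h. Da h y)) (at y)"
    and D2: "\<And>u y. y \<in> U \<Longrightarrow> (Da u has_derivative (\<lambda>h. Db h u y)) (at y)"
    and C: "\<And>u w. continuous (at x) (Db w u)"
  shows "Db w u x = Db u w x"
proof (rule tendsto_unique[OF trivial_limit_at_right_real])
  show "((\<lambda>s. (\<phi> (x + s *\<^sub>R u + s *\<^sub>R w) - \<phi> (x + s *\<^sub>R u) - \<phi> (x + s *\<^sub>R w) + \<phi> x) / s\<^sup>2)
          \<longlongrightarrow> Db w u x) (at_right 0)"
    by (rule second_difference_quotient_tendsto[OF U D1 D2 C])
  have "((\<lambda>s. (\<phi> (x + s *\<^sub>R w + s *\<^sub>R u) - \<phi> (x + s *\<^sub>R w) - \<phi> (x + s *\<^sub>R u) + \<phi> x) / s\<^sup>2)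
          \<longlongrightarrow> Db u w x) (at_right 0)"
    by (rule second_difference_quotient_tendsto[OF U D1 D2 C])
  then show "((\<lambda>s. (\<phi> (x + s *\<^sub>R u + s *\<^sub>R w) - \<phi> (x + s *\<^sub>R u) - \<phi> (x + s *\<^sub>R w) + \<phi> x) / s\<^sup>2)
          \<longlongrightarrow> Db u w x) (at_right 0)"
    by (simp add: algebra_simps)
qed

lemma smooth_on_pd_swap:
  fixes f :: "real^'n \<Rightarrow> real^'m"
  assumes f: "smooth_on U f" and U: "open U" "x \<in> U"
  shows "pd f [u, w] x = pd f [w, u] x"
proof -
  have "pd f [u, w] x $ i = pd f [w, u] x $ i" for i
  proof (rule mixed_partials_commute[where \<phi>="\<lambda>y. f y $ i" and Da="\<lambda>h y. pd f [h] y $ i"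
        and Db="\<lambda>h u y. pd f [h, u] y $ i", OF U])
    fix u y assume "y \<in> U"
    show "((\<lambda>y. f y $ i) has_derivative (\<lambda>h. pd f [h] y $ i)) (at y)"
      using bounded_linear.has_derivative[OF bounded_linear_vec_nth
          smooth_on_has_derivative_pd[OF f \<open>y \<in> U\<close>, of "[]"]] by simp
    show "((\<lambda>y. pd f [u] y $ i) has_derivative (\<lambda>h. pd f [h, u] y $ i)) (at y)"
      using bounded_linear.has_derivative[OF bounded_linear_vec_nth
          smooth_on_has_derivative_pd[OF f \<open>y \<in> U\<close>, of "[u]"]] by simp
  next
    fix u w
    have "isCont (pd f [w, u]) x"
      using f U differentiable_imp_continuous_within smooth_on_def by blast
    then show "continuous (at x) (\<lambda>y. pd f [w, u] y $ i)" by simp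
  qed
  then show ?thesis by (simp add: vec_eq_iff)
qed

lemma smooth_on_pd_swap12:
  fixes f :: "real^'n \<Rightarrow> real^'m"
  assumes "smooth_on U f" "open U" "x \<in> U"
  shows "pd f [a, b, c] x = pd f [b, a, c] x"
  using smooth_on_pd_swap[OF smooth_on_pd[OF assms(1)] assms(2,3)]
  by (metis append_Cons append_Nil pd_snoc)

lemma smooth_on_pd_swap23:
  fixes f :: "real^'n \<Rightarrow> real^'m"
  assumes f: "smooth_on U f" and U: "open U" "x \<in> U"
  shows "pd f [a, b, c] x = pd f [a, c, b] x"
proof -
  have "(pd f [b, c] has_derivative (\<lambda>u. pd f [u, c, b] x)) (at x)"
    by (rule has_derivative_transform_within_open[OF smooth_on_has_derivative_pd[OF f U(2)] U])
       (use smooth_on_pd_swap[OF f U(1)] in auto)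
  from has_derivative_unique[OF smooth_on_has_derivative_pd[OF f U(2)] this]
  show ?thesis by (metis pd.simps(2))
qed

lemma has_derivative_eq_0_if_constant_on_ray:
  fixes \<phi> :: "'a::real_normed_vector \<Rightarrow> 'b::real_normed_vector"
  assumes D: "(\<phi> has_derivative \<phi>') (at x)"
    and \<epsilon>: "\<epsilon> > 0" and const: "\<And>s. 0 < s \<Longrightarrow> s < \<epsilon> \<Longrightarrow> \<phi> (x + s *\<^sub>R d) = \<phi> x"
  shows "\<phi>' d = 0"
proof -
  have "((\<lambda>t. \<phi> (x + t *\<^sub>R d)) has_vector_derivative \<phi>' d) (at 0 within {0..\<epsilon>/2})"
    using has_derivative_along_line[of \<phi> \<phi>' x 0 d] D by (simp add: has_vector_derivative_def)
  moreover have "((\<lambda>t. \<phi> (x + t *\<^sub>R d)) has_vector_derivative 0) (at 0 within {0..\<epsilon>/2})"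
  proof (rule has_vector_derivative_transform_within[where f="\<lambda>t. \<phi> x" and d=\<epsilon>])
    show "\<phi> x = \<phi> (x + t *\<^sub>R d)" if "t \<in> {0..\<epsilon>/2}" "dist t 0 < \<epsilon>" for t
      using that const[of t] by (cases "t = 0") auto
  qed (use \<epsilon> in auto)
  moreover have "at 0 within {0..\<epsilon>/2} \<noteq> (bot :: real filter)"
    using \<epsilon> by (simp add: trivial_limit_within)
  ultimately show ?thesis using vector_derivative_unique_within by blast
qed

lemma has_derivative_eq_0_if_constant_on:
  assumes D: "(\<phi> has_derivative \<phi>') (at x)" and U: "open U" "x \<in> U"
    and const: "\<And>y. y \<in> U \<Longrightarrow> Q y \<Longrightarrow> \<phi> y = \<phi> x"
    and Q: "\<And>s. s > 0 \<Longrightarrow> Q (x + s *\<^sub>R d)"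
  shows "\<phi>' d = 0"
proof -
  obtain r where r: "r > 0" "ball x r \<subseteq> U" using U open_contains_ball by blast
  have nd: "norm d + 1 > 0" by (simp add: add_nonneg_pos)
  show ?thesis
  proof (rule has_derivative_eq_0_if_constant_on_ray[OF D, of "r / (norm d + 1)"])
    fix s assume s: "0 < s" "s < r / (norm d + 1)"
    have "norm (s *\<^sub>R d) \<le> s * (norm d + 1)" using s by simp
    also have "\<dots> < r" using s nd by (simp add: pos_less_divide_eq)
    finally have "x + s *\<^sub>R d \<in> U" using r by (auto simp: dist_norm subset_iff)
    then show "\<phi> (x + s *\<^sub>R d) = \<phi> x" using const Q s by blast
  qed (use r nd in simp)
qed

lemma has_derivative_eq_0_if_locally_constant:
  assumes "(\<phi> has_derivative \<phi>') (at x)" "open U" "x \<in> U" "\<And>y. y \<in> U \<Longrightarrow> \<phi> y = c"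
  shows "\<phi>' h = 0"
  using has_derivative_eq_0_if_constant_on[where Q="\<lambda>_. True"] assms by metis

lemma linear_inner_left_comp: assumes "linear f" shows "linear (\<lambda>x. f x \<bullet> c)"
  by (rule linearI) (simp_all add: linear_add[OF assms] linear_scale[OF assms] inner_add_left)

lemma linear_inner_right_comp: assumes "linear f" shows "linear (\<lambda>x. c \<bullet> f x)"
  by (rule linearI) (simp_all add: linear_add[OF assms] linear_scale[OF assms] inner_add_right)

lemma linear_eq_sum_axis:
  fixes f :: "real^'n \<Rightarrow> 'b::real_vector"
  assumes "linear f"
  shows "f x = (\<Sum>i\<in>UNIV. x$i *\<^sub>R f (axis i 1))"
proof -
  have "f x = f (\<Sum>i\<in>UNIV. x$i *\<^sub>R axis i 1)"
    using basis_expansion[of x] by (simp add: scalar_mult_eq_scaleR)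
  also have "\<dots> = (\<Sum>i\<in>UNIV. x$i *\<^sub>R f (axis i 1))"
    by (simp add: linear_sum[OF assms] linear_scale[OF assms])
  finally show ?thesis .
qed

lemma bilinear_eq_sum_axis:
  fixes g :: "real^'n \<Rightarrow> real^'n \<Rightarrow> real"
  assumes "\<And>y. linear (\<lambda>x. g x y)" "\<And>x. linear (g x)"
  shows "g x y = (\<Sum>i\<in>UNIV. \<Sum>j\<in>UNIV. x$i * y$j * g (axis i 1) (axis j 1))"
proof -
  have "g x y = (\<Sum>i\<in>UNIV. x$i * g (axis i 1) y)"
    using linear_eq_sum_axis[OF assms(1), of x] by simp
  also have "\<dots> = (\<Sum>i\<in>UNIV. x$i * (\<Sum>j\<in>UNIV. y$j * g (axis i 1) (axis j 1)))"
    using linear_eq_sum_axis[OF assms(2)] by (metis (no_types, lifting) real_scaleR_def sum.cong)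
  finally show ?thesis by (simp add: sum_distrib_left mult.assoc)
qed

lemma invertible_matrix_inv:
  fixes A :: "real^'n^'n"
  assumes "invertible A"
  shows "A ** matrix_inv A = mat 1" "matrix_inv A ** A = mat 1"
  using someI_ex[OF assms[unfolded invertible_def]] unfolding matrix_inv_def by auto

lemma matrix_inv_unique:
  fixes A P :: "real^'n^'n"
  assumes "A ** P = mat 1"
  shows "matrix_inv A = P"
proof -
  have "invertible A"
    using assms matrix_left_right_inverse unfolding invertible_def by blast
  have "matrix_inv A = matrix_inv A ** (A ** P)" by (simp add: assms)
  also have "\<dots> = (matrix_inv A ** A) ** P" by (simp add: matrix_mul_assoc)
  also have "\<dots> = P" by (simp add: invertible_matrix_inv[OF \<open>invertible A\<close>])
  finally show ?thesis .
qed

lemma matrix_inv_cramer: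
  fixes A :: "real^'n^'n"
  assumes "invertible A"
  shows "matrix_inv A $ i $ j = det (\<chi> r c. if c = i then axis j 1 $ r else A $ r $ c) / det A"
proof -
  have "det A \<noteq> 0" using assms invertible_det_nz by blast
  moreover have "A *v (matrix_inv A *v axis j 1) = axis j 1"
    using invertible_matrix_inv(1)[OF assms] by (simp add: matrix_vector_mul_assoc)
  ultimately have "matrix_inv A *v axis j 1
      = (\<chi> k. det (\<chi> r c. if c = k then axis j 1 $ r else A $ r $ c) / det A)"
    using cramer by blast
  moreover have "(matrix_inv A *v axis j 1) $ i = matrix_inv A $ i $ j"
    by (simp add: matrix_vector_mult_def axis_def if_distrib[of "\<lambda>y. _ * y"] cong: if_cong)
  ultimately show ?thesis by simp
qed

lemma differentiable_prod:
  fixes f :: "'i \<Rightarrow> 'a::real_normed_vector \<Rightarrow> real"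
  assumes "\<And>i. i \<in> I \<Longrightarrow> f i differentiable (at x)"
  shows "(\<lambda>y. \<Prod>i\<in>I. f i y) differentiable (at x)"
proof -
  obtain D where "\<And>i. i \<in> I \<Longrightarrow> (f i has_derivative D i) (at x)"
    using assms unfolding differentiable_def by metis
  then show ?thesis unfolding differentiable_def by (blast intro: has_derivative_prod)
qed

lemma differentiable_det:
  fixes M :: "real^'n \<Rightarrow> real^'k^'k"
  assumes "\<And>r c. (\<lambda>y. M y $ r $ c) differentiable (at x)"
  shows "(\<lambda>y. det (M y)) differentiable (at x)"
  unfolding det_def
  by (intro differentiable_sum ballI differentiable_mult differentiable_const differentiable_prod assms)
     (simp add: finite_permutations)

lemma orthonormal_expansion:
  fixes C :: "'a::euclidean_space set"
  assumes orth: "pairwise orthogonal C" and norm: "\<And>c. c \<in> C \<Longrightarrow> norm c = 1"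
    and card: "card C = DIM('a)"
  shows "y = (\<Sum>c\<in>C. (c \<bullet> y) *\<^sub>R c)"
proof -
  have "independent C"
    using pairwise_orthogonal_independent[OF orth] norm by force
  moreover have "finite C" using orth pairwise_orthogonal_imp_finite by blast
  ultimately have "y \<in> span C" using card card_eq_dim[of C UNIV] by auto
  define z where "z = y - (\<Sum>b\<in>C. (b \<bullet> y / (b \<bullet> b)) *\<^sub>R b)"
  have "z \<in> span C"
    unfolding z_def by (intro span_diff \<open>y \<in> span C\<close> span_sum span_scale span_base)
  then have "orthogonal z z" using Gram_Schmidt_step[OF orth, of z y] unfolding z_def by blast
  moreover have "(\<Sum>b\<in>C. (b \<bullet> y / (b \<bullet> b)) *\<^sub>R b) = (\<Sum>b\<in>C. (b \<bullet> y) *\<^sub>R b)"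
    using norm by (intro sum.cong) (simp_all add: power2_norm_eq_inner[symmetric])
  ultimately show ?thesis unfolding z_def by (simp add: orthogonal_def)
qed

lemma sum_swap_pairs:
  "(\<Sum>i\<in>I. \<Sum>k\<in>K. \<Sum>a\<in>A. \<Sum>b\<in>B. f i k a b) = (\<Sum>a\<in>A. \<Sum>b\<in>B. \<Sum>i\<in>I. \<Sum>k\<in>K. f i k a b)"
proof -
  have "(\<Sum>i\<in>I. \<Sum>k\<in>K. \<Sum>a\<in>A. \<Sum>b\<in>B. f i k a b) = (\<Sum>i\<in>I. \<Sum>a\<in>A. \<Sum>k\<in>K. \<Sum>b\<in>B. f i k a b)"
    by (rule sum.cong[OF refl], rule sum.swap)
  also have "\<dots> = (\<Sum>i\<in>I. \<Sum>a\<in>A. \<Sum>b\<in>B. \<Sum>k\<in>K. f i k a b)"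
    by (intro sum.cong[OF refl] sum.swap)
  also have "\<dots> = (\<Sum>a\<in>A. \<Sum>i\<in>I. \<Sum>b\<in>B. \<Sum>k\<in>K. f i k a b)"
    by (rule sum.swap)
  also have "\<dots> = (\<Sum>a\<in>A. \<Sum>b\<in>B. \<Sum>i\<in>I. \<Sum>k\<in>K. f i k a b)"
    by (intro sum.cong[OF refl] sum.swap)
  finally show ?thesis .
qed

definition frame_comp :: "('b \<Rightarrow> real^'n) \<Rightarrow> ('n \<Rightarrow> 'n \<Rightarrow> real) \<Rightarrow> 'b \<Rightarrow> 'b \<Rightarrow> real" where
  "frame_comp E R a b = (\<Sum>i\<in>UNIV. \<Sum>k\<in>UNIV. E a $ i * E b $ k * R i k)"

lemma frame_comp_bilinear:
  assumes "\<And>y. linear (\<lambda>x. g x y)" "\<And>x. linear (\<lambda>y. g x y)"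
  shows "frame_comp E (\<lambda>i j. g (axis i 1) (axis j 1)) a b = g (E a) (E b)"
  unfolding frame_comp_def using bilinear_eq_sum_axis[of g, OF assms, of "E a" "E b"] by simp

lemma contract_frame_expansion:
  "(\<Sum>i\<in>UNIV. \<Sum>k\<in>UNIV. (\<Sum>a\<in>S. \<Sum>b\<in>S. \<alpha> a b * E a $ i * E b $ k) * R i k)
   = (\<Sum>a\<in>S. \<Sum>b\<in>S. \<alpha> a b * frame_comp E R a b)"
proof -
  have "(\<Sum>i\<in>UNIV. \<Sum>k\<in>UNIV. (\<Sum>a\<in>S. \<Sum>b\<in>S. \<alpha> a b * E a $ i * E b $ k) * R i k)
     = (\<Sum>i\<in>UNIV. \<Sum>k\<in>UNIV. \<Sum>a\<in>S. \<Sum>b\<in>S. \<alpha> a b * (E a $ i * E b $ k * R i k))"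
    by (simp add: sum_distrib_right mult.assoc)
  also have "\<dots> = (\<Sum>a\<in>S. \<Sum>b\<in>S. \<Sum>i\<in>UNIV. \<Sum>k\<in>UNIV. \<alpha> a b * (E a $ i * E b $ k * R i k))"
    by (rule sum_swap_pairs)
  also have "\<dots> = (\<Sum>a\<in>S. \<Sum>b\<in>S. \<alpha> a b * frame_comp E R a b)"
    by (simp add: frame_comp_def sum_distrib_left)
  finally show ?thesis .
qed

lemma frame_comp_product:
  "frame_comp E (\<lambda>j l. (\<Sum>i\<in>UNIV. E a $ i * C i j) * (\<Sum>k\<in>UNIV. E b $ k * D k l)) c d
     = frame_comp E C a c * frame_comp E D b d"
proof -
  have comp: "(\<Sum>j\<in>UNIV. E c $ j * (\<Sum>i\<in>UNIV. E a $ i * C i j)) = frame_comp E C a c" for a c C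
  proof -
    have "(\<Sum>j\<in>UNIV. E c $ j * (\<Sum>i\<in>UNIV. E a $ i * C i j))
        = (\<Sum>j\<in>UNIV. \<Sum>i\<in>UNIV. E a $ i * E c $ j * C i j)"
      by (intro sum.cong refl) (simp add: sum_distrib_left mult_ac)
    also have "\<dots> = frame_comp E C a c" unfolding frame_comp_def by (rule sum.swap)
    finally show ?thesis .
  qed
  define X where "X j = (\<Sum>i\<in>UNIV. E a $ i * C i j)" for j
  define Y where "Y l = (\<Sum>k\<in>UNIV. E b $ k * D k l)" for l
  have "frame_comp E (\<lambda>j l. X j * Y l) c d = (\<Sum>j\<in>UNIV. \<Sum>l\<in>UNIV. (E c $ j * X j) * (E d $ l * Y l))"
    unfolding frame_comp_def by (intro sum.cong refl) (simp only: mult_ac)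
  also have "\<dots> = (\<Sum>j\<in>UNIV. E c $ j * X j) * (\<Sum>l\<in>UNIV. E d $ l * Y l)"
    by (rule sum_product[symmetric])
  finally show ?thesis unfolding X_def Y_def comp .
qed

lemma frame_comp_contraction:
  assumes B: "\<And>j l. B j l = (\<Sum>c\<in>S. \<Sum>d\<in>S. \<beta> c d * E c $ j * E d $ l)"
  shows "frame_comp E (\<lambda>i k. \<Sum>j\<in>UNIV. \<Sum>l\<in>UNIV. B j l * C i j * D k l) a b
     = (\<Sum>c\<in>S. \<Sum>d\<in>S. \<beta> c d * (frame_comp E C a c * frame_comp E D b d))"
proof -
  define R where "R j l = (\<Sum>i\<in>UNIV. E a $ i * C i j) * (\<Sum>k\<in>UNIV. E b $ k * D k l)" for j l
  have "frame_comp E (\<lambda>i k. \<Sum>j\<in>UNIV. \<Sum>l\<in>UNIV. B j l * C i j * D k l) a b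
      = (\<Sum>i\<in>UNIV. \<Sum>k\<in>UNIV. \<Sum>j\<in>UNIV. \<Sum>l\<in>UNIV. B j l * (E a $ i * E b $ k * C i j * D k l))"
    unfolding frame_comp_def by (simp add: sum_distrib_left mult_ac)
  also have "\<dots> = (\<Sum>j\<in>UNIV. \<Sum>l\<in>UNIV. \<Sum>i\<in>UNIV. \<Sum>k\<in>UNIV. B j l * (E a $ i * E b $ k * C i j * D k l))"
    by (rule sum_swap_pairs)
  also have "\<dots> = (\<Sum>j\<in>UNIV. \<Sum>l\<in>UNIV. B j l * R j l)"
  proof (intro sum.cong refl)
    fix j l
    show "(\<Sum>i\<in>UNIV. \<Sum>k\<in>UNIV. B j l * (E a $ i * E b $ k * C i j * D k l)) = B j l * R j l"
      unfolding R_def sum_product by (simp add: sum_distrib_left mult_ac)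
  qed
  also have "\<dots> = (\<Sum>c\<in>S. \<Sum>d\<in>S. \<beta> c d * frame_comp E R c d)"
    unfolding B by (rule contract_frame_expansion)
  finally show ?thesis unfolding R_def frame_comp_product .
qed

lemma contract_two_frame_expansions:
  assumes A: "\<And>i k. A i k = (\<Sum>a\<in>S. \<Sum>b\<in>S. \<alpha> a b * E a $ i * E b $ k)"
    and B: "\<And>j l. B j l = (\<Sum>c\<in>S. \<Sum>d\<in>S. \<beta> c d * E c $ j * E d $ l)"
  shows "(\<Sum>i\<in>UNIV. \<Sum>j\<in>UNIV. \<Sum>k\<in>UNIV. \<Sum>l\<in>UNIV. A i k * B j l * C i j * D k l)
    = (\<Sum>a\<in>S. \<Sum>b\<in>S. \<alpha> a b * (\<Sum>c\<in>S. \<Sum>d\<in>S. \<beta> c d * (frame_comp E C a c * frame_comp E D b d)))"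
proof -
  have "(\<Sum>i\<in>UNIV. \<Sum>j\<in>UNIV. \<Sum>k\<in>UNIV. \<Sum>l\<in>UNIV. A i k * B j l * C i j * D k l)
      = (\<Sum>i\<in>UNIV. \<Sum>k\<in>UNIV. A i k * (\<Sum>j\<in>UNIV. \<Sum>l\<in>UNIV. B j l * C i j * D k l))"
  proof (rule sum.cong[OF refl])
    fix i
    show "(\<Sum>j\<in>UNIV. \<Sum>k\<in>UNIV. \<Sum>l\<in>UNIV. A i k * B j l * C i j * D k l)
        = (\<Sum>k\<in>UNIV. A i k * (\<Sum>j\<in>UNIV. \<Sum>l\<in>UNIV. B j l * C i j * D k l))"
      by (subst sum.swap) (simp add: sum_distrib_left mult.assoc)
  qed
  also have "\<dots> = (\<Sum>a\<in>S. \<Sum>b\<in>S. \<alpha> a b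
                 * frame_comp E (\<lambda>i k. \<Sum>j\<in>UNIV. \<Sum>l\<in>UNIV. B j l * C i j * D k l) a b)"
    unfolding A by (rule contract_frame_expansion)
  finally show ?thesis by (simp only: frame_comp_contraction[OF B])
qed

text \<open>The algebraic core of the computation, in an orthonormal frame indexed by insert z B: z
  stands for the outer normal of the sphere and B for the directions tangent to the boundary.
  In the application H is the second fundamental form, \<Gamma> a b c is the inner product of the
  second derivative of F in directions a, b with the first derivative in direction c, T a b c
  is the normal component of the third derivative, and GD, Hd are the derivatives of the metric
  and of H in direction z.  The hypotheses encode the free boundary condition (H i z = 0), the
  second fundamental form of the unit sphere (\<Gamma> j i z = -\<delta> i j), the derivative of the free
  boundary condition along the boundary, minimality and its derivative in direction z.\<close>
locale boundary_frame_algebra =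
  fixes B :: "'a set" and z :: 'a
    and H Hd GD :: "'a \<Rightarrow> 'a \<Rightarrow> real" and \<Gamma> T :: "'a \<Rightarrow> 'a \<Rightarrow> 'a \<Rightarrow> real"
  assumes finite_B: "finite B" and z_notin_B: "z \<notin> B"
    and H_sym: "\<And>a b. H a b = H b a"
    and \<Gamma>_sym: "\<And>a b c. \<Gamma> a b c = \<Gamma> b a c"
    and T_sym12: "\<And>a b c. T a b c = T b a c" and T_sym23: "\<And>a b c. T a b c = T a c b"
    and GD_eq: "\<And>a b. GD a b = \<Gamma> z b a + \<Gamma> z a b"
    and Hd_eq: "\<And>a b. Hd a b = T z a b - (\<Sum>c\<in>insert z B. H z c * \<Gamma> a b c)"
    and H_boundary_normal: "\<And>i. i \<in> B \<Longrightarrow> H i z = 0"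
    and \<Gamma>_boundary: "\<And>i j. i \<in> B \<Longrightarrow> j \<in> B \<Longrightarrow> \<Gamma> j i z = (if i = j then -1 else 0)"
    and T_boundary: "\<And>i j. i \<in> B \<Longrightarrow> j \<in> B \<Longrightarrow>
      T j i z = - H i j + (\<Sum>c\<in>insert z B. H i c * \<Gamma> j z c) + (\<Sum>c\<in>insert z B. H j c * \<Gamma> i z c)"
    and trace_H: "(\<Sum>a\<in>insert z B. H a a) = 0"
    and trace_Hd: "(\<Sum>a\<in>insert z B. \<Sum>b\<in>insert z B. GD a b * H a b) = (\<Sum>a\<in>insert z B. Hd a a)"
begin

abbreviation "S \<equiv> insert z B"

definition "h = H z z"
definition "g = \<Gamma> z z z"
definition "Hsq i j = (\<Sum>l\<in>B. H i l * H j l)"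
definition "R = (\<Sum>i\<in>B. \<Sum>j\<in>B. \<Gamma> z i j * Hsq i j)"
definition "P = (\<Sum>i\<in>B. \<Sum>l\<in>B. \<Gamma> z i l * H i l)"
definition "Q = (\<Sum>i\<in>B. \<Sum>j\<in>B. (H i j)\<^sup>2)"

lemma sum_S: "(\<Sum>c\<in>S. f c) = f z + (\<Sum>c\<in>B. f c)"
  using finite_B z_notin_B by simp

lemma H_normal_boundary: "i \<in> B \<Longrightarrow> H z i = 0"
  using H_boundary_normal H_sym by metis

lemma sum_S_H_boundary: "i \<in> B \<Longrightarrow> (\<Sum>c\<in>S. H i c * X c) = (\<Sum>l\<in>B. H i l * X l)"
  unfolding sum_S using H_boundary_normal by simp

lemma sum_S_H_normal: "(\<Sum>c\<in>S. H z c * X c) = h * X z"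
  unfolding sum_S h_def using H_normal_boundary by simp

lemma trace_H_boundary: "(\<Sum>i\<in>B. H i i) = - h"
  using trace_H unfolding sum_S h_def by linarith

lemma Hd_eq': "Hd a c = T z a c - h * \<Gamma> a c z"
  unfolding Hd_eq sum_S_H_normal ..

lemma Hd_normal: "Hd z z = T z z z - h * g"
  unfolding Hd_eq' g_def ..

lemma T_normal_boundary: "i \<in> B \<Longrightarrow> j \<in> B \<Longrightarrow>
    T z i j = - H i j + (\<Sum>l\<in>B. H i l * \<Gamma> z j l) + (\<Sum>l\<in>B. H j l * \<Gamma> z i l)"
proof -
  assume ij: "i \<in> B" "j \<in> B"
  have "T z i j = T j i z" by (metis T_sym12 T_sym23)
  also have "\<dots> = - H i j + (\<Sum>l\<in>B. H i l * \<Gamma> z j l) + (\<Sum>l\<in>B. H j l * \<Gamma> z i l)"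
    using T_boundary[OF ij] sum_S_H_boundary[OF ij(1)] sum_S_H_boundary[OF ij(2)]
      \<Gamma>_sym[of j z] \<Gamma>_sym[of i z] by simp
  finally show ?thesis .
qed

lemma GD_contract_H_square: "(\<Sum>a\<in>S. \<Sum>b\<in>S. GD a b * (\<Sum>c\<in>S. H a c * H b c)) = 2 * R + 2 * g * h\<^sup>2"
proof -
  have inner_boundary: "(\<Sum>c\<in>S. H a c * H b c) = Hsq a b" if "a \<in> B" "b \<in> B" for a b
    using sum_S_H_boundary[OF that(1), of "H b"] unfolding Hsq_def .
  have inner_mixed: "(\<Sum>c\<in>S. H a c * H z c) = 0" if "a \<in> B" for a
    using sum_S_H_boundary[OF that, of "H z"] H_normal_boundary by simp
  have "(\<Sum>a\<in>S. \<Sum>b\<in>S. GD a b * (\<Sum>c\<in>S. H a c * H b c))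
      = (\<Sum>b\<in>S. GD z b * (h * H b z)) + (\<Sum>a\<in>B. \<Sum>b\<in>S. GD a b * (\<Sum>c\<in>S. H a c * H b c))"
    unfolding sum_S[of "\<lambda>a. \<Sum>b\<in>S. GD a b * (\<Sum>c\<in>S. H a c * H b c)"] sum_S_H_normal ..
  also have "(\<Sum>b\<in>S. GD z b * (h * H b z)) = GD z z * h\<^sup>2"
    unfolding sum_S h_def using H_boundary_normal by (simp add: power2_eq_square)
  also have "(\<Sum>a\<in>B. \<Sum>b\<in>S. GD a b * (\<Sum>c\<in>S. H a c * H b c)) = (\<Sum>a\<in>B. \<Sum>b\<in>B. GD a b * Hsq a b)"
  proof (rule sum.cong[OF refl])
    fix a assume a: "a \<in> B"
    show "(\<Sum>b\<in>S. GD a b * (\<Sum>c\<in>S. H a c * H b c)) = (\<Sum>b\<in>B. GD a b * Hsq a b)"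
      unfolding sum_S[of "\<lambda>b. GD a b * (\<Sum>c\<in>S. H a c * H b c)"] inner_mixed[OF a]
      using inner_boundary[OF a] by simp
  qed
  also have "(\<Sum>a\<in>B. \<Sum>b\<in>B. GD a b * Hsq a b) = (\<Sum>a\<in>B. \<Sum>b\<in>B. \<Gamma> z b a * Hsq a b) + R"
    unfolding R_def GD_eq by (simp add: algebra_simps sum.distrib)
  also have "(\<Sum>a\<in>B. \<Sum>b\<in>B. \<Gamma> z b a * Hsq a b) = R"
    unfolding R_def Hsq_def by (subst sum.swap) (simp add: mult.commute)
  also have "GD z z = 2 * g" unfolding GD_eq g_def by simp
  finally show ?thesis by (simp add: algebra_simps)
qed

lemma GD_contract_H_square': "(\<Sum>a\<in>S. \<Sum>c\<in>S. \<Sum>d\<in>S. GD c d * (H a c * H a d)) = 2 * R + 2 * g * h\<^sup>2"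
proof -
  have "(\<Sum>a\<in>S. \<Sum>c\<in>S. \<Sum>d\<in>S. GD c d * (H a c * H a d)) = (\<Sum>c\<in>S. \<Sum>d\<in>S. \<Sum>a\<in>S. GD c d * (H a c * H a d))"
    by (subst sum.swap) (rule sum.cong[OF refl], rule sum.swap)
  also have "\<dots> = (\<Sum>c\<in>S. \<Sum>d\<in>S. GD c d * (\<Sum>a\<in>S. H c a * H d a))"
    unfolding sum_distrib_left by (intro sum.cong refl) (metis H_sym)
  finally show ?thesis using GD_contract_H_square by simp
qed

lemma T_contract_H_boundary: "(\<Sum>i\<in>B. \<Sum>j\<in>B. T z i j * H i j) = - Q + 2 * R"
proof -
  have Hsq_left: "(\<Sum>i\<in>B. H i j * H i l) = Hsq j l" for j l
    unfolding Hsq_def by (rule sum.cong[OF refl]) (metis H_sym)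
  have Hsq_mid: "(\<Sum>j\<in>B. H i j * H j l) = Hsq i l" for i l
    unfolding Hsq_def by (rule sum.cong[OF refl]) (metis H_sym)
  have "(\<Sum>i\<in>B. \<Sum>j\<in>B. T z i j * H i j)
      = (\<Sum>i\<in>B. \<Sum>j\<in>B. (- ((H i j)\<^sup>2)) + (\<Sum>l\<in>B. H i j * H i l * \<Gamma> z j l)
                                     + (\<Sum>l\<in>B. H i j * H j l * \<Gamma> z i l))"
    by (intro sum.cong refl) (simp add: T_normal_boundary algebra_simps power2_eq_square sum_distrib_left)
  also have "\<dots> = - Q + (\<Sum>i\<in>B. \<Sum>j\<in>B. \<Sum>l\<in>B. H i j * H i l * \<Gamma> z j l)
                     + (\<Sum>i\<in>B. \<Sum>j\<in>B. \<Sum>l\<in>B. H i j * H j l * \<Gamma> z i l)"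
    unfolding Q_def by (simp add: sum.distrib sum_negf sum_subtractf)
  also have "(\<Sum>i\<in>B. \<Sum>j\<in>B. \<Sum>l\<in>B. H i j * H i l * \<Gamma> z j l) = R"
  proof -
    have "(\<Sum>i\<in>B. \<Sum>j\<in>B. \<Sum>l\<in>B. H i j * H i l * \<Gamma> z j l) = (\<Sum>j\<in>B. \<Sum>l\<in>B. \<Sum>i\<in>B. H i j * H i l * \<Gamma> z j l)"
      by (subst sum.swap) (rule sum.cong[OF refl], rule sum.swap)
    also have "\<dots> = R" unfolding R_def
      by (simp add: sum_distrib_left[symmetric] sum_distrib_right[symmetric] Hsq_left mult.commute)
    finally show ?thesis .
  qed
  also have "(\<Sum>i\<in>B. \<Sum>j\<in>B. \<Sum>l\<in>B. H i j * H j l * \<Gamma> z i l) = R"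
  proof -
    have "(\<Sum>i\<in>B. \<Sum>j\<in>B. \<Sum>l\<in>B. H i j * H j l * \<Gamma> z i l) = (\<Sum>i\<in>B. \<Sum>l\<in>B. \<Sum>j\<in>B. H i j * H j l * \<Gamma> z i l)"
      by (rule sum.cong[OF refl], rule sum.swap)
    also have "\<dots> = R" unfolding R_def
      by (simp add: sum_distrib_left[symmetric] sum_distrib_right[symmetric] Hsq_mid mult.commute)
    finally show ?thesis .
  qed
  finally show ?thesis by simp
qed

lemma Hd_contract_H: "(\<Sum>a\<in>S. \<Sum>c\<in>S. Hd a c * H a c) = - Q + 2 * R - h\<^sup>2 + (T z z z - h * g) * h"
proof -
  have "(\<Sum>a\<in>S. \<Sum>c\<in>S. Hd a c * H a c) = Hd z z * h + (\<Sum>i\<in>B. \<Sum>j\<in>B. Hd i j * H i j)"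
    unfolding sum_S h_def using H_boundary_normal H_normal_boundary by simp
  also have "(\<Sum>i\<in>B. \<Sum>j\<in>B. Hd i j * H i j)
      = (\<Sum>i\<in>B. \<Sum>j\<in>B. T z i j * H i j + h * (if i = j then H i j else 0))"
    by (intro sum.cong refl) (simp add: Hd_eq' \<Gamma>_boundary algebra_simps)
  also have "\<dots> = (\<Sum>i\<in>B. \<Sum>j\<in>B. T z i j * H i j) + h * (\<Sum>i\<in>B. H i i)"
    using finite_B by (simp add: sum.distrib sum_distrib_left[symmetric])
  finally show ?thesis
    unfolding T_contract_H_boundary trace_H_boundary Hd_normal by (simp add: power2_eq_square)
qed

lemma GD_contract_H: "(\<Sum>a\<in>S. \<Sum>b\<in>S. GD a b * H a b) = 2 * P + 2 * g * h"
proof -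
  have "(\<Sum>a\<in>S. \<Sum>b\<in>S. GD a b * H a b) = GD z z * h + (\<Sum>i\<in>B. \<Sum>j\<in>B. GD i j * H i j)"
    unfolding sum_S h_def using H_boundary_normal H_normal_boundary by simp
  also have "(\<Sum>i\<in>B. \<Sum>j\<in>B. GD i j * H i j) = (\<Sum>i\<in>B. \<Sum>j\<in>B. \<Gamma> z j i * H i j) + P"
    unfolding GD_eq P_def by (simp add: algebra_simps sum.distrib)
  also have "(\<Sum>i\<in>B. \<Sum>j\<in>B. \<Gamma> z j i * H i j) = P"
    unfolding P_def by (subst sum.swap) (intro sum.cong refl, metis H_sym)
  also have "GD z z = 2 * g" unfolding GD_eq g_def by simp
  finally show ?thesis by simp
qed

lemma trace_Hd_eq: "(\<Sum>a\<in>S. Hd a a) = h + 2 * P + real (card B) * h + T z z z - h * g"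
proof -
  have "(\<Sum>i\<in>B. T z i i) = h + 2 * P"
  proof -
    have "(\<Sum>i\<in>B. T z i i) = (\<Sum>i\<in>B. - H i i + 2 * (\<Sum>l\<in>B. \<Gamma> z i l * H i l))"
      by (intro sum.cong refl) (simp add: T_normal_boundary mult.commute)
    also have "\<dots> = - (\<Sum>i\<in>B. H i i) + 2 * P"
      unfolding P_def by (simp add: sum.distrib sum_negf sum_subtractf sum_distrib_left)
    finally show ?thesis using trace_H_boundary by simp
  qed
  moreover have "(\<Sum>i\<in>B. Hd i i) = (\<Sum>i\<in>B. T z i i + h)"
    by (intro sum.cong refl) (simp add: Hd_eq' \<Gamma>_boundary)
  ultimately show ?thesis unfolding sum_S Hd_normal by (simp add: sum.distrib)
qed

text \<open>The third normal derivative of F in the sphere normal direction is determined by the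
  derivative of the minimal surface equation.\<close>
lemma T_normal: "T z z z = 3 * g * h - (real (card B) + 1) * h"
  using trace_Hd GD_contract_H trace_Hd_eq by (simp add: algebra_simps)

theorem derivative_identity:
  "- (\<Sum>a\<in>S. \<Sum>b\<in>S. GD a b * (\<Sum>c\<in>S. H a c * H b c))
   - (\<Sum>a\<in>S. \<Sum>c\<in>S. \<Sum>d\<in>S. GD c d * (H a c * H a d))
   + 2 * (\<Sum>a\<in>S. \<Sum>c\<in>S. Hd a c * H a c)
   = - 2 * (\<Sum>a\<in>S. \<Sum>c\<in>S. (H a c)\<^sup>2) - 2 * real (card S) * (H z z)\<^sup>2"
proof -
  have "(\<Sum>a\<in>S. \<Sum>c\<in>S. (H a c)\<^sup>2) = Q + h\<^sup>2"
    unfolding sum_S Q_def h_def using H_boundary_normal H_normal_boundary by simp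
  moreover have "card S = card B + 1" using finite_B z_notin_B by simp
  ultimately show ?thesis
    unfolding GD_contract_H_square GD_contract_H_square' Hd_contract_H T_normal h_def[symmetric]
    by (simp add: algebra_simps power2_eq_square)
qed

end

lemma subspace_coordinate_hyperplane: "subspace {t::real^'n. t $ k = 0}"
  by (simp add: subspace_def)

lemma dim_coordinate_hyperplane: "dim {t::real^'n. t $ k = 0} = CARD('n) - 1"
proof -
  have "{t::real^'n. t $ k = 0} = {t. axis k 1 \<bullet> t = 0}" by (simp add: inner_axis')
  moreover have "dim {t::real^'n. axis k (1::real) \<bullet> t = 0} = DIM(real^'n) - 1"
    by (rule dim_hyperplane) simp
  ultimately show ?thesis by simp
qed

locale free_boundary_chart =
  fixes F N :: "real^'n \<Rightarrow> real^'m" and U :: "(real^'n) set" and k :: 'n and p v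
  assumes dim: "CARD('m) = CARD('n) + 1"
    and U: "open U"
    and F_smooth: "smooth_on U F"
    and immersion: "\<forall>x\<in>U. inj (frechet_derivative F (at x))"
    and N_smooth: "smooth_on U N"
    and N_unit: "\<forall>x\<in>U. norm (N x) = 1"
    and N_normal: "\<forall>x\<in>U. \<forall>i. N x \<bullet> dF F x i = 0"
    and minimal: "\<forall>x\<in>U. x $ k \<le> 0 \<longrightarrow> mean_curv F N x = 0"
    and bdry_sphere: "\<forall>x\<in>U. x $ k = 0 \<longrightarrow> norm (F x) = 1"
    and free_bdry: "\<forall>x\<in>U. x $ k = 0 \<longrightarrow> N x \<bullet> F x = 0"
    and p: "p \<in> U" "p $ k = 0"
    and v: "frechet_derivative F (at p) v = F p"
begin

lemma F_has_derivative_pd: "x \<in> U \<Longrightarrow> (pd F vs has_derivative (\<lambda>u. pd F (u # vs) x)) (at x)"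
  using smooth_on_has_derivative_pd[OF F_smooth] .

lemma N_has_derivative_pd: "x \<in> U \<Longrightarrow> (pd N vs has_derivative (\<lambda>u. pd N (u # vs) x)) (at x)"
  using smooth_on_has_derivative_pd[OF N_smooth] .

lemma F_has_derivative: "x \<in> U \<Longrightarrow> (F has_derivative (\<lambda>u. pd F [u] x)) (at x)"
  using F_has_derivative_pd[of x "[]"] by simp

lemma N_has_derivative: "x \<in> U \<Longrightarrow> (N has_derivative (\<lambda>u. pd N [u] x)) (at x)"
  using N_has_derivative_pd[of x "[]"] by simp

lemma F_linear_pd: "x \<in> U \<Longrightarrow> linear (\<lambda>u. pd F (u # vs) x)"
  using smooth_on_linear_pd[OF F_smooth] .

lemma F_pd_swap: "x \<in> U \<Longrightarrow> pd F [u, w] x = pd F [w, u] x"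
  using smooth_on_pd_swap[OF F_smooth U] .

lemma N_orthogonal_dF: assumes "x \<in> U" shows "N x \<bullet> pd F [c] x = 0"
proof -
  have "pd F [c] x = (\<Sum>i\<in>UNIV. c$i *\<^sub>R pd F [axis i 1] x)"
    using linear_eq_sum_axis[OF F_linear_pd[OF assms, of "[]"], of c] by simp
  then show ?thesis using N_normal assms by (simp add: inner_sum_right dF_def)
qed

lemma N_orthogonal_dN: assumes x: "x \<in> U" shows "N x \<bullet> pd N [u] x = 0"
proof -
  have "N x \<bullet> pd N [u] x + pd N [u] x \<bullet> N x = 0"
    by (rule has_derivative_eq_0_if_locally_constant[OF
          has_derivative_inner[OF N_has_derivative[OF x] N_has_derivative[OF x]] U x, where c=1])
       (use N_unit in \<open>simp add: power2_norm_eq_inner[symmetric]\<close>)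
  then show ?thesis by (simp add: inner_commute)
qed

lemma Weingarten: assumes x: "x \<in> U"
  shows "pd N [t] x \<bullet> pd F [c] x + N x \<bullet> pd F [t, c] x = 0"
proof -
  have "N x \<bullet> pd F [t, c] x + pd N [t] x \<bullet> pd F [c] x = 0"
    by (rule has_derivative_eq_0_if_locally_constant[OF
          has_derivative_inner[OF N_has_derivative[OF x] F_has_derivative_pd[OF x, of "[c]"]] U x,
          where c=0])
       (rule N_orthogonal_dF)
  then show ?thesis by simp
qed

lemma Weingarten_derivative: assumes x: "x \<in> U"
  shows "pd N [t', t] x \<bullet> pd F [c] x + pd N [t] x \<bullet> pd F [t', c] x + pd N [t'] x \<bullet> pd F [t, c] x
         + N x \<bullet> pd F [t', t, c] x = 0"
proof -
  have "(pd N [t] x \<bullet> pd F [t', c] x + pd N [t', t] x \<bullet> pd F [c] x)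
        + (N x \<bullet> pd F [t', t, c] x + pd N [t'] x \<bullet> pd F [t, c] x) = 0"
    by (rule has_derivative_eq_0_if_locally_constant[OF has_derivative_add[OF
          has_derivative_inner[OF N_has_derivative_pd[OF x, of "[t]"] F_has_derivative_pd[OF x, of "[c]"]]
          has_derivative_inner[OF N_has_derivative[OF x] F_has_derivative_pd[OF x, of "[t, c]"]]] U x,
          where c=0])
       (rule Weingarten)
  then show ?thesis by simp
qed

lemma F_orthogonal_boundary_dF:
  assumes x: "x \<in> U" "x $ k = 0" and t: "t $ k = 0"
  shows "F x \<bullet> pd F [t] x = 0"
proof -
  have "F x \<bullet> pd F [t] x + pd F [t] x \<bullet> F x = 0"
    by (rule has_derivative_eq_0_if_constant_on[OF
          has_derivative_inner[OF F_has_derivative[OF x(1)] F_has_derivative[OF x(1)]] U x(1),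
          where Q="\<lambda>y. y $ k = 0"])
       (use bdry_sphere x t in \<open>simp_all add: power2_norm_eq_inner[symmetric]\<close>)
  then show ?thesis by (simp add: inner_commute)
qed

lemma boundary_dF_dF:
  assumes "t $ k = 0" "t' $ k = 0"
  shows "pd F [t'] p \<bullet> pd F [t] p + F p \<bullet> pd F [t', t] p = 0"
proof -
  have "F p \<bullet> pd F [t', t] p + pd F [t'] p \<bullet> pd F [t] p = 0"
    by (rule has_derivative_eq_0_if_constant_on[OF
          has_derivative_inner[OF F_has_derivative[OF p(1)] F_has_derivative_pd[OF p(1), of "[t]"]]
          U p(1), where Q="\<lambda>y. y $ k = 0"])
       (use F_orthogonal_boundary_dF p assms in simp_all)
  then show ?thesis by simp
qed

lemma boundary_dN_orthogonal_F:
  assumes x: "x \<in> U" "x $ k = 0" and t: "t $ k = 0"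
  shows "pd N [t] x \<bullet> F x = 0"
proof -
  have "N x \<bullet> pd F [t] x + pd N [t] x \<bullet> F x = 0"
    by (rule has_derivative_eq_0_if_constant_on[OF
          has_derivative_inner[OF N_has_derivative[OF x(1)] F_has_derivative[OF x(1)]] U x(1),
          where Q="\<lambda>y. y $ k = 0"])
       (use free_bdry x t in simp_all)
  then show ?thesis using N_orthogonal_dF[OF x(1)] by simp
qed

lemma boundary_ddN_F:
  assumes "t $ k = 0" "t' $ k = 0"
  shows "pd N [t', t] p \<bullet> F p + pd N [t] p \<bullet> pd F [t'] p = 0"
proof -
  have "pd N [t] p \<bullet> pd F [t'] p + pd N [t', t] p \<bullet> F p = 0"
    by (rule has_derivative_eq_0_if_constant_on[OF
          has_derivative_inner[OF N_has_derivative_pd[OF p(1), of "[t]"] F_has_derivative[OF p(1)]]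
          U p(1), where Q="\<lambda>y. y $ k = 0"])
       (use boundary_dN_orthogonal_F p assms in simp_all)
  then show ?thesis by simp
qed

abbreviation L where "L \<equiv> frechet_derivative F (at p)"

lemma L_linear: "linear L" using F_linear_pd[OF p(1), of "[]"] by simp

lemma L_inj: "inj L" using immersion p by blast

definition "boundary_tangents = L ` {t. t $ k = 0}"

lemma subspace_boundary_tangents: "subspace boundary_tangents"
  unfolding boundary_tangents_def by (rule linear_subspace_image[OF L_linear subspace_coordinate_hyperplane])

lemma dim_boundary_tangents: "dim boundary_tangents = CARD('n) - 1"
proof -
  have "aff_dim boundary_tangents = aff_dim {t::real^'n. t $ k = 0}"
    unfolding boundary_tangents_def by (rule aff_dim_injective_linear_image[OF L_linear L_inj])
  then have "int (dim boundary_tangents) = int (dim {t::real^'n. t $ k = 0})"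
    using aff_dim_subspace[OF subspace_boundary_tangents] aff_dim_subspace[OF subspace_coordinate_hyperplane]
    by simp
  then show ?thesis using dim_coordinate_hyperplane by simp
qed

definition "boundary_onb = (SOME B. B \<subseteq> boundary_tangents \<and> pairwise orthogonal B \<and> (\<forall>x\<in>B. norm x = 1)
   \<and> independent B \<and> card B = dim boundary_tangents \<and> span B = boundary_tangents)"

lemma boundary_onb_spec: "boundary_onb \<subseteq> boundary_tangents \<and> pairwise orthogonal boundary_onb
   \<and> (\<forall>x\<in>boundary_onb. norm x = 1) \<and> independent boundary_onb
   \<and> card boundary_onb = dim boundary_tangents \<and> span boundary_onb = boundary_tangents"
proof -
  obtain B where "B \<subseteq> boundary_tangents" "pairwise orthogonal B" "\<And>x. x \<in> B \<Longrightarrow> norm x = 1"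
    "independent B" "card B = dim boundary_tangents" "span B = boundary_tangents"
    using orthonormal_basis_subspace[OF subspace_boundary_tangents] by metis
  then have "\<exists>B. B \<subseteq> boundary_tangents \<and> pairwise orthogonal B \<and> (\<forall>x\<in>B. norm x = 1)
     \<and> independent B \<and> card B = dim boundary_tangents \<and> span B = boundary_tangents" by blast
  then show ?thesis unfolding boundary_onb_def by (rule someI_ex)
qed

lemma boundary_onb: "boundary_onb \<subseteq> boundary_tangents" "pairwise orthogonal boundary_onb"
  "\<And>x. x \<in> boundary_onb \<Longrightarrow> norm x = 1" "card boundary_onb = CARD('n) - 1"
  using boundary_onb_spec dim_boundary_tangents by auto

lemma finite_boundary_onb: "finite boundary_onb"
  using boundary_onb(2) pairwise_orthogonal_imp_finite by blast

lemma inner_Fp_Fp: "F p \<bullet> F p = 1"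
  using bdry_sphere p by (simp add: power2_norm_eq_inner[symmetric])

lemma inner_Np_Np: "N p \<bullet> N p = 1"
  using N_unit p by (simp add: power2_norm_eq_inner[symmetric])

lemma inner_Np_L: "N p \<bullet> L u = 0" using N_orthogonal_dF[OF p(1), of u] by simp

lemma inner_Np_Fp: "N p \<bullet> F p = 0" using free_bdry p by blast

lemma boundary_onb_orthogonal_Fp: "b \<in> boundary_onb \<Longrightarrow> F p \<bullet> b = 0"
  using boundary_onb(1) F_orthogonal_boundary_dF[OF p] unfolding boundary_tangents_def by auto

lemma boundary_onb_orthogonal_Np: "b \<in> boundary_onb \<Longrightarrow> N p \<bullet> b = 0"
  using boundary_onb(1) inner_Np_L unfolding boundary_tangents_def by blast

lemma Fp_notin_boundary_onb: "F p \<notin> boundary_onb"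
  using boundary_onb_orthogonal_Fp inner_Fp_Fp by fastforce

text \<open>F p is the outer normal of the sphere, which is tangent to M at the boundary point p.\<close>
definition "tangent_onb = insert (F p) boundary_onb"
definition "ambient_onb = insert (N p) tangent_onb"

lemma finite_tangent_onb: "finite tangent_onb"
  unfolding tangent_onb_def using finite_boundary_onb by simp

lemma Np_notin_tangent_onb: "N p \<notin> tangent_onb"
  unfolding tangent_onb_def using boundary_onb_orthogonal_Np inner_Np_Np inner_Np_Fp by fastforce

lemma card_tangent_onb: "card tangent_onb = CARD('n)"
  unfolding tangent_onb_def
  using finite_boundary_onb Fp_notin_boundary_onb boundary_onb(4) by simp

lemma inner_tangent_onb: "a \<in> tangent_onb \<Longrightarrow> b \<in> tangent_onb \<Longrightarrow> a \<bullet> b = (if a = b then 1 else 0)"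
  using boundary_onb(2,3) boundary_onb_orthogonal_Fp inner_Fp_Fp Fp_notin_boundary_onb
  unfolding tangent_onb_def pairwise_def orthogonal_def
  by (auto simp: inner_commute power2_norm_eq_inner[symmetric])

lemma inner_ambient_onb: "a \<in> ambient_onb \<Longrightarrow> b \<in> ambient_onb \<Longrightarrow> a \<bullet> b = (if a = b then 1 else 0)"
  using inner_tangent_onb inner_Np_Np Np_notin_tangent_onb boundary_onb_orthogonal_Np inner_Np_Fp
  unfolding ambient_onb_def tangent_onb_def by (auto simp: inner_commute)

lemma ambient_expansion: "y = (\<Sum>c\<in>ambient_onb. (c \<bullet> y) *\<^sub>R c)"
proof (rule orthonormal_expansion)
  show "pairwise orthogonal ambient_onb"
    using inner_ambient_onb unfolding pairwise_def orthogonal_def by auto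
  show "norm c = 1" if "c \<in> ambient_onb" for c
    using inner_ambient_onb[OF that that] by (simp add: norm_eq_sqrt_inner)
  show "card ambient_onb = DIM(real^'m)"
    unfolding ambient_onb_def using finite_tangent_onb Np_notin_tangent_onb card_tangent_onb dim by simp
qed

definition \<tau> where "\<tau> b = inv L b"

lemma L_\<tau>: "b \<in> tangent_onb \<Longrightarrow> L (\<tau> b) = b"
proof -
  assume "b \<in> tangent_onb"
  then have "b \<in> range L"
    using boundary_onb(1) v unfolding tangent_onb_def boundary_tangents_def
    by (auto intro: range_eqI[of _ _ v])
  then show ?thesis unfolding \<tau>_def by (simp add: f_inv_into_f)
qed

lemma \<tau>_Fp: "\<tau> (F p) = v" unfolding \<tau>_def by (rule inv_f_eq[OF L_inj v])

lemma \<tau>_boundary: "b \<in> boundary_onb \<Longrightarrow> \<tau> b $ k = 0"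
  using boundary_onb(1) inv_f_eq[OF L_inj] unfolding boundary_tangents_def \<tau>_def by auto

lemma L_expansion: "L u = (\<Sum>b\<in>tangent_onb. (b \<bullet> L u) *\<^sub>R b)"
proof -
  have "L u = (\<Sum>c\<in>ambient_onb. (c \<bullet> L u) *\<^sub>R c)" by (rule ambient_expansion)
  then show ?thesis
    unfolding ambient_onb_def using finite_tangent_onb Np_notin_tangent_onb inner_Np_L by simp
qed

lemma \<tau>_expansion: "u = (\<Sum>b\<in>tangent_onb. (b \<bullet> L u) *\<^sub>R \<tau> b)"
proof -
  have "L (\<Sum>b\<in>tangent_onb. (b \<bullet> L u) *\<^sub>R \<tau> b) = (\<Sum>b\<in>tangent_onb. (b \<bullet> L u) *\<^sub>R L (\<tau> b))"
    by (simp add: linear_sum[OF L_linear] linear_scale[OF L_linear])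
  also have "\<dots> = L u" by (simp add: L_\<tau> L_expansion[symmetric])
  finally show ?thesis using L_inj by (simp add: inj_eq)
qed

definition frame_ginv :: "real^'n^'n" where
  "frame_ginv = (\<chi> i j. \<Sum>b\<in>tangent_onb. \<tau> b $ i * \<tau> b $ j)"

lemma metric_mult_frame_ginv: "metric F p ** frame_ginv = mat 1"
proof -
  have "(metric F p ** frame_ginv) $ i $ j = mat 1 $ i $ j" for i j
  proof -
    have "(metric F p ** frame_ginv) $ i $ j
        = (\<Sum>l\<in>UNIV. (L (axis i 1) \<bullet> L (axis l 1)) * (\<Sum>b\<in>tangent_onb. \<tau> b $ l * \<tau> b $ j))"
      by (simp add: matrix_matrix_mult_def metric_def dF_def frame_ginv_def)
    also have "\<dots> = (\<Sum>b\<in>tangent_onb. (\<Sum>l\<in>UNIV. \<tau> b $ l * (L (axis i 1) \<bullet> L (axis l 1))) * \<tau> b $ j)"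
      by (simp add: sum_distrib_left sum_distrib_right sum.swap[of _ UNIV tangent_onb] mult_ac)
    also have "\<dots> = (\<Sum>b\<in>tangent_onb. (L (axis i 1) \<bullet> L (\<tau> b)) * \<tau> b $ j)"
    proof (rule sum.cong[OF refl])
      fix b
      show "(\<Sum>l\<in>UNIV. \<tau> b $ l * (L (axis i 1) \<bullet> L (axis l 1))) * \<tau> b $ j
          = (L (axis i 1) \<bullet> L (\<tau> b)) * \<tau> b $ j"
        using linear_eq_sum_axis[OF L_linear, of "\<tau> b"] by (simp add: inner_sum_right)
    qed
    also have "\<dots> = (\<Sum>b\<in>tangent_onb. (b \<bullet> L (axis i 1)) *\<^sub>R \<tau> b) $ j"
      by (simp add: L_\<tau> inner_commute)
    also have "\<dots> = mat 1 $ i $ j" using \<tau>_expansion[of "axis i 1"] by (simp add: axis_def mat_def)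
    finally show ?thesis .
  qed
  then show ?thesis by (simp add: vec_eq_iff)
qed

lemma matrix_inv_metric_p: "matrix_inv (metric F p) = frame_ginv"
  by (rule matrix_inv_unique[OF metric_mult_frame_ginv])

lemma metric_entry: "metric F y $ i $ j = pd F [axis i 1] y \<bullet> pd F [axis j 1] y"
  by (simp add: metric_def dF_def)

lemma metric_has_derivative: assumes "x \<in> U"
  shows "((\<lambda>y. metric F y $ i $ j) has_derivative
     (\<lambda>h. pd F [axis i 1] x \<bullet> pd F [h, axis j 1] x + pd F [h, axis i 1] x \<bullet> pd F [axis j 1] x)) (at x)"
  unfolding metric_entry
  using has_derivative_inner[OF F_has_derivative_pd[OF assms] F_has_derivative_pd[OF assms]] .

lemma metric_differentiable: "x \<in> U \<Longrightarrow> (\<lambda>y. metric F y $ i $ j) differentiable (at x)"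
  using metric_has_derivative unfolding differentiable_def by blast

lemma invertible_metric: assumes x: "x \<in> U" shows "invertible (metric F x)"
proof -
  have dF_expansion: "pd F [y] x = (\<Sum>j\<in>UNIV. y$j *\<^sub>R pd F [axis j 1] x)" for y
    using linear_eq_sum_axis[OF F_linear_pd[OF x, of "[]"], of y] by simp
  have metric_vec: "(metric F x *v y) $ i = pd F [axis i 1] x \<bullet> pd F [y] x" for i y
  proof -
    have "(metric F x *v y) $ i = pd F [axis i 1] x \<bullet> (\<Sum>j\<in>UNIV. y$j *\<^sub>R pd F [axis j 1] x)"
      by (simp add: matrix_vector_mult_def metric_entry inner_sum_right mult.commute)
    then show ?thesis by (simp only: dF_expansion[of y, symmetric])
  qed
  have "y = 0" if "metric F x *v y = 0" for y
  proof -
    have "0 = (\<Sum>i\<in>UNIV. y$i * (metric F x *v y)$i)" using that by simp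
    also have "\<dots> = (\<Sum>i\<in>UNIV. y$i *\<^sub>R pd F [axis i 1] x) \<bullet> pd F [y] x"
      by (simp add: metric_vec inner_sum_left)
    also have "\<dots> = pd F [y] x \<bullet> pd F [y] x" by (simp only: dF_expansion[of y, symmetric])
    finally have "frechet_derivative F (at x) y = frechet_derivative F (at x) 0"
      using linear_0[OF F_linear_pd[OF x, of "[]"]] by simp
    then show "y = 0" using immersion x by (simp add: inj_eq)
  qed
  then show ?thesis
    unfolding invertible_left_inverse matrix_left_invertible_ker by blast
qed

lemma inverse_metric_has_derivative:
  "((\<lambda>y. matrix_inv (metric F y) $ i $ j) has_derivative
    frechet_derivative (\<lambda>y. matrix_inv (metric F y) $ i $ j) (at p)) (at p)"
proof -
  let ?minor = "\<lambda>y. det (\<chi> r c. if c = i then axis j 1 $ r else metric F y $ r $ c)"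
  have "(\<lambda>y. ?minor y / det (metric F y)) differentiable (at p)"
  proof (rule differentiable_divide)
    show "?minor differentiable (at p)"
    proof (rule differentiable_det)
      fix r c
      show "(\<lambda>y. (\<chi> r c. if c = i then axis j 1 $ r else metric F y $ r $ c) $ r $ c) differentiable (at p)"
        by (cases "c = i") (simp_all add: metric_differentiable[OF p(1)])
    qed
    show "(\<lambda>y. det (metric F y)) differentiable (at p)"
      by (rule differentiable_det) (rule metric_differentiable[OF p(1)])
    show "det (metric F p) \<noteq> 0" using invertible_metric[OF p(1)] invertible_det_nz by blast
  qed
  then obtain D where "((\<lambda>y. ?minor y / det (metric F y)) has_derivative D) (at p)"
    unfolding differentiable_def by blast
  then have "((\<lambda>y. matrix_inv (metric F y) $ i $ j) has_derivative D) (at p)"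
    by (rule has_derivative_transform_within_open[OF _ U p(1)])
       (simp add: matrix_inv_cramer[OF invertible_metric])
  then show ?thesis using frechet_derivative_at by metis
qed

definition "dginv i j = frechet_derivative (\<lambda>y. matrix_inv (metric F y) $ i $ j) (at p) v"
definition "dmetric x y = L x \<bullet> pd F [v, y] p + pd F [v, x] p \<bullet> L y"

lemma dmetric_ginv_plus_metric_dginv:
  "(\<Sum>l\<in>UNIV. dmetric (axis i 1) (axis l 1) * frame_ginv $ l $ j + metric F p $ i $ l * dginv l j) = 0"
proof -
  have "(\<Sum>l\<in>UNIV. metric F y $ i $ l * matrix_inv (metric F y) $ l $ j) = mat 1 $ i $ j"
    if "y \<in> U" for y
    using invertible_matrix_inv(1)[OF invertible_metric[OF that]]
    by (simp add: matrix_matrix_mult_def vec_eq_iff)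
  from has_derivative_eq_0_if_locally_constant[OF
      has_derivative_sum[OF has_derivative_mult[OF metric_has_derivative[OF p(1)] inverse_metric_has_derivative]]
      U p(1) this, of v]
  show ?thesis
    by (simp add: dginv_def dmetric_def matrix_inv_metric_p metric_entry add.commute)
qed

definition dmetric_mat :: "real^'n^'n" where "dmetric_mat = (\<chi> i l. dmetric (axis i 1) (axis l 1))"
definition dginv_mat :: "real^'n^'n" where "dginv_mat = (\<chi> l j. dginv l j)"

lemma dginv_mat_eq: "dginv_mat = - (frame_ginv ** (dmetric_mat ** frame_ginv))"
proof -
  have "dmetric_mat ** frame_ginv + metric F p ** dginv_mat = 0"
    using dmetric_ginv_plus_metric_dginv
    by (simp add: vec_eq_iff matrix_matrix_mult_def dmetric_mat_def dginv_mat_def sum.distrib)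
  then have "metric F p ** dginv_mat = - (dmetric_mat ** frame_ginv)"
    by (simp add: eq_neg_iff_add_eq_0 add.commute)
  moreover have "frame_ginv ** metric F p = mat 1"
    using metric_mult_frame_ginv matrix_left_right_inverse by blast
  ultimately have "dginv_mat = frame_ginv ** - (dmetric_mat ** frame_ginv)"
    by (metis matrix_mul_assoc matrix_mul_lid)
  then show ?thesis by (simp add: vec_eq_iff matrix_matrix_mult_def sum_negf)
qed

definition "dsff x y = pd F [v, x, y] p \<bullet> N p + pd F [x, y] p \<bullet> pd N [v] p"

lemma sff_mat_entry: "sff_mat F N x $ i $ j = sff F N x (axis i 1) (axis j 1)"
  by (simp add: sff_mat_def)

lemma linear_ddF_left: "linear (\<lambda>x. pd F [x, y] p)"
  using F_linear_pd[OF p(1)] .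

lemma linear_ddF_right: "linear (\<lambda>y. pd F [x, y] p)"
proof -
  have "(\<lambda>y. pd F [x, y] p) = (\<lambda>y. pd F [y, x] p)" by (rule ext) (rule F_pd_swap[OF p(1)])
  then show ?thesis using F_linear_pd[OF p(1), of "[x]"] by simp
qed

lemma linear_dddF_middle: "linear (\<lambda>x. pd F [v, x, y] p)"
proof -
  have "(\<lambda>x. pd F [v, x, y] p) = (\<lambda>x. pd F [x, v, y] p)"
    by (rule ext) (rule smooth_on_pd_swap12[OF F_smooth U p(1)])
  then show ?thesis using F_linear_pd[OF p(1), of "[v, y]"] by simp
qed

lemma linear_dddF_right: "linear (\<lambda>y. pd F [v, x, y] p)"
proof -
  have "(\<lambda>y. pd F [v, x, y] p) = (\<lambda>y. pd F [y, v, x] p)"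
    by (rule ext) (metis smooth_on_pd_swap12[OF F_smooth U p(1)] smooth_on_pd_swap23[OF F_smooth U p(1)])
  then show ?thesis using F_linear_pd[OF p(1), of "[v, x]"] by simp
qed

lemma linear_dmetric: "linear (\<lambda>x. dmetric x y)" "linear (\<lambda>y. dmetric x y)"
  unfolding dmetric_def
  by (intro linear_compose_add linear_inner_left_comp linear_inner_right_comp L_linear linear_ddF_right)+

lemma linear_sff: "linear (\<lambda>x. sff F N p x y)" "linear (\<lambda>y. sff F N p x y)"
  unfolding sff_def by (intro linear_inner_left_comp linear_ddF_left linear_ddF_right)+

lemma linear_dsff: "linear (\<lambda>x. dsff x y)" "linear (\<lambda>y. dsff x y)"
  unfolding dsff_def
  by (intro linear_compose_add linear_inner_left_comp linear_dddF_middle linear_dddF_right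
      linear_ddF_left linear_ddF_right)+

lemma frame_comp_sff: "frame_comp \<tau> (\<lambda>i j. sff_mat F N p $ i $ j) a b = sff F N p (\<tau> a) (\<tau> b)"
  unfolding sff_mat_entry by (rule frame_comp_bilinear[OF linear_sff])

lemma frame_comp_dsff: "frame_comp \<tau> (\<lambda>i j. dsff (axis i 1) (axis j 1)) a b = dsff (\<tau> a) (\<tau> b)"
  by (rule frame_comp_bilinear[OF linear_dsff])

lemma sum_tangent_onb_delta:
  "a \<in> tangent_onb \<Longrightarrow> (\<Sum>b\<in>tangent_onb. (if a = b then 1 else 0) * X b) = (X a :: real)"
  using finite_tangent_onb by (simp add: if_distrib[of "\<lambda>c. c * _"] cong: if_cong)

lemma sum_tangent_onb_delta2:
  "(\<Sum>a\<in>tangent_onb. \<Sum>b\<in>tangent_onb. (if a = b then 1 else 0) * X a b) = (\<Sum>a\<in>tangent_onb. (X a a :: real))"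
  by (rule sum.cong[OF refl]) (rule sum_tangent_onb_delta)

lemma frame_ginv_expansion:
  "frame_ginv $ i $ q = (\<Sum>a\<in>tangent_onb. \<Sum>b\<in>tangent_onb. (if a = b then 1 else 0) * \<tau> a $ i * \<tau> b $ q)"
  unfolding frame_ginv_def
  using sum_tangent_onb_delta[of _ "\<lambda>b. \<tau> _ $ i * \<tau> b $ q"] by (simp add: mult.assoc cong: sum.cong)

lemma dginv_expansion:
  "dginv i q = (\<Sum>a\<in>tangent_onb. \<Sum>b\<in>tangent_onb. (- dmetric (\<tau> a) (\<tau> b)) * \<tau> a $ i * \<tau> b $ q)"
proof -
  have "dginv i q = - (\<Sum>r\<in>UNIV. \<Sum>s\<in>UNIV. (frame_ginv $ i $ r * frame_ginv $ s $ q) * dmetric_mat $ r $ s)"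
    using dginv_mat_eq
    by (simp add: vec_eq_iff dginv_mat_def matrix_matrix_mult_def sum_distrib_left mult_ac)
  also have "\<dots> = - (\<Sum>r\<in>UNIV. \<Sum>s\<in>UNIV. (\<Sum>a\<in>tangent_onb. \<Sum>b\<in>tangent_onb.
                      (\<tau> a $ i * \<tau> b $ q) * \<tau> a $ r * \<tau> b $ s) * dmetric_mat $ r $ s)"
    unfolding frame_ginv_def by (simp add: sum_product mult_ac)
  also have "\<dots> = - (\<Sum>a\<in>tangent_onb. \<Sum>b\<in>tangent_onb.
                      (\<tau> a $ i * \<tau> b $ q) * frame_comp \<tau> (\<lambda>r s. dmetric_mat $ r $ s) a b)"
    by (simp only: contract_frame_expansion)
  also have "\<dots> = - (\<Sum>a\<in>tangent_onb. \<Sum>b\<in>tangent_onb. (\<tau> a $ i * \<tau> b $ q) * dmetric (\<tau> a) (\<tau> b))"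
    unfolding dmetric_mat_def by (simp add: frame_comp_bilinear[OF linear_dmetric])
  finally show ?thesis by (simp add: sum_negf[symmetric] mult_ac)
qed

lemma contract_frame_ginv: "(\<Sum>i\<in>UNIV. \<Sum>k\<in>UNIV. frame_ginv $ i $ k * R i k) = (\<Sum>a\<in>tangent_onb. frame_comp \<tau> R a a)"
  unfolding frame_ginv_expansion contract_frame_expansion sum_tangent_onb_delta2 ..

lemma contract_dginv:
  "(\<Sum>i\<in>UNIV. \<Sum>k\<in>UNIV. dginv i k * R i k)
   = (\<Sum>a\<in>tangent_onb. \<Sum>b\<in>tangent_onb. (- dmetric (\<tau> a) (\<tau> b)) * frame_comp \<tau> R a b)"
  unfolding dginv_expansion by (rule contract_frame_expansion)

lemma contract_frame_ginv_frame_ginv: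
  "(\<Sum>i\<in>UNIV. \<Sum>j\<in>UNIV. \<Sum>k\<in>UNIV. \<Sum>l\<in>UNIV. frame_ginv $ i $ k * frame_ginv $ j $ l * C i j * D k l)
   = (\<Sum>a\<in>tangent_onb. \<Sum>c\<in>tangent_onb. frame_comp \<tau> C a c * frame_comp \<tau> D a c)"
  unfolding contract_two_frame_expansions[OF frame_ginv_expansion frame_ginv_expansion]
  by (simp only: sum_tangent_onb_delta2)

lemma contract_dginv_frame_ginv:
  "(\<Sum>i\<in>UNIV. \<Sum>j\<in>UNIV. \<Sum>k\<in>UNIV. \<Sum>l\<in>UNIV. dginv i k * frame_ginv $ j $ l * C i j * D k l)
   = (\<Sum>a\<in>tangent_onb. \<Sum>b\<in>tangent_onb. (- dmetric (\<tau> a) (\<tau> b))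
        * (\<Sum>c\<in>tangent_onb. frame_comp \<tau> C a c * frame_comp \<tau> D b c))"
  unfolding contract_two_frame_expansions[OF dginv_expansion frame_ginv_expansion]
  by (simp only: sum_tangent_onb_delta2)

lemma contract_frame_ginv_dginv:
  "(\<Sum>i\<in>UNIV. \<Sum>j\<in>UNIV. \<Sum>k\<in>UNIV. \<Sum>l\<in>UNIV. frame_ginv $ i $ k * dginv j l * C i j * D k l)
   = (\<Sum>a\<in>tangent_onb. \<Sum>c\<in>tangent_onb. \<Sum>d\<in>tangent_onb. (- dmetric (\<tau> c) (\<tau> d))
        * (frame_comp \<tau> C a c * frame_comp \<tau> D a d))"
  unfolding contract_two_frame_expansions[OF frame_ginv_expansion dginv_expansion]
  by (simp only: sum_tangent_onb_delta2)

lemma sff_mat_has_derivative: "((\<lambda>y. sff_mat F N y $ i $ j) has_derivative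
   (\<lambda>h. pd F [axis i 1, axis j 1] p \<bullet> pd N [h] p + pd F [h, axis i 1, axis j 1] p \<bullet> N p)) (at p)"
proof -
  have "sff_mat F N y $ i $ j = pd F [axis i 1, axis j 1] y \<bullet> N y" for y
    by (simp add: sff_mat_entry sff_def)
  then show ?thesis
    using has_derivative_inner[OF F_has_derivative_pd[OF p(1), of "[axis i 1, axis j 1]"]
        N_has_derivative[OF p(1)]] by simp
qed

lemma sff_mat_derivative_v:
  "pd F [axis i 1, axis j 1] p \<bullet> pd N [v] p + pd F [v, axis i 1, axis j 1] p \<bullet> N p
     = dsff (axis i 1) (axis j 1)"
  by (simp add: dsff_def add.commute)

lemma normA2_eq: "normA2 F N = (\<lambda>x. \<Sum>i\<in>UNIV. \<Sum>j\<in>UNIV. \<Sum>k\<in>UNIV. \<Sum>l\<in>UNIV.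
   matrix_inv (metric F x) $ i $ k * matrix_inv (metric F x) $ j $ l * sff_mat F N x $ i $ j * sff_mat F N x $ k $ l)"
  by (rule ext) (simp add: normA2_def Let_def)

lemma mean_curv_eq:
  "mean_curv F N = (\<lambda>x. \<Sum>i\<in>UNIV. \<Sum>j\<in>UNIV. matrix_inv (metric F x) $ i $ j * sff_mat F N x $ i $ j)"
  by (rule ext) (simp add: mean_curv_def Let_def)

lemma normA2_derivative_coords: "frechet_derivative (normA2 F N) (at p) v =
  (\<Sum>i\<in>UNIV. \<Sum>j\<in>UNIV. \<Sum>k\<in>UNIV. \<Sum>l\<in>UNIV. dginv i k * frame_ginv $ j $ l * sff_mat F N p $ i $ j * sff_mat F N p $ k $ l)
  + (\<Sum>i\<in>UNIV. \<Sum>j\<in>UNIV. \<Sum>k\<in>UNIV. \<Sum>l\<in>UNIV. frame_ginv $ i $ k * dginv j l * sff_mat F N p $ i $ j * sff_mat F N p $ k $ l)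
  + (\<Sum>i\<in>UNIV. \<Sum>j\<in>UNIV. \<Sum>k\<in>UNIV. \<Sum>l\<in>UNIV. frame_ginv $ i $ k * frame_ginv $ j $ l * dsff (axis i 1) (axis j 1) * sff_mat F N p $ k $ l)
  + (\<Sum>i\<in>UNIV. \<Sum>j\<in>UNIV. \<Sum>k\<in>UNIV. \<Sum>l\<in>UNIV. frame_ginv $ i $ k * frame_ginv $ j $ l * sff_mat F N p $ i $ j * dsff (axis k 1) (axis l 1))"
proof -
  have "(normA2 F N has_derivative (\<lambda>h. \<Sum>i\<in>UNIV. \<Sum>j\<in>UNIV. \<Sum>k\<in>UNIV. \<Sum>l\<in>UNIV.
      matrix_inv (metric F p) $ i $ k * matrix_inv (metric F p) $ j $ l * sff_mat F N p $ i $ j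
        * (pd F [axis k 1, axis l 1] p \<bullet> pd N [h] p + pd F [h, axis k 1, axis l 1] p \<bullet> N p)
    + (matrix_inv (metric F p) $ i $ k * matrix_inv (metric F p) $ j $ l
        * (pd F [axis i 1, axis j 1] p \<bullet> pd N [h] p + pd F [h, axis i 1, axis j 1] p \<bullet> N p)
      + (matrix_inv (metric F p) $ i $ k * frechet_derivative (\<lambda>y. matrix_inv (metric F y) $ j $ l) (at p) h
         + frechet_derivative (\<lambda>y. matrix_inv (metric F y) $ i $ k) (at p) h * matrix_inv (metric F p) $ j $ l)
        * sff_mat F N p $ i $ j) * sff_mat F N p $ k $ l)) (at p)"
    unfolding normA2_eq
    by (intro has_derivative_sum has_derivative_mult inverse_metric_has_derivative sff_mat_has_derivative)
  note eq = sym[OF fun_cong[OF frechet_derivative_at[OF this], of v]]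
  show ?thesis
    unfolding eq dginv_def[symmetric] matrix_inv_metric_p sff_mat_derivative_v
    by (simp add: sum.distrib algebra_simps)
qed

lemma mean_curv_derivative_v:
  "(\<Sum>i\<in>UNIV. \<Sum>j\<in>UNIV. frame_ginv $ i $ j * dsff (axis i 1) (axis j 1))
   + (\<Sum>i\<in>UNIV. \<Sum>j\<in>UNIV. dginv i j * sff_mat F N p $ i $ j) = 0"
proof -
  define D where "D h = (\<Sum>i\<in>UNIV. \<Sum>j\<in>UNIV. matrix_inv (metric F p) $ i $ j
      * (pd F [axis i 1, axis j 1] p \<bullet> pd N [h] p + pd F [h, axis i 1, axis j 1] p \<bullet> N p)
    + frechet_derivative (\<lambda>y. matrix_inv (metric F y) $ i $ j) (at p) h * sff_mat F N p $ i $ j)" for h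
  have D: "(mean_curv F N has_derivative D) (at p)"
    unfolding mean_curv_eq D_def
    by (intro has_derivative_sum has_derivative_mult inverse_metric_has_derivative sff_mat_has_derivative)
  have inward: "D d = 0" if "d $ k \<le> 0" for d
  proof (rule has_derivative_eq_0_if_constant_on[OF D U p(1), where Q="\<lambda>y. y $ k \<le> 0"])
    show "mean_curv F N y = mean_curv F N p" if "y \<in> U" "y $ k \<le> 0" for y
      using minimal that p by simp
    show "(p + s *\<^sub>R d) $ k \<le> 0" if "s > 0" for s
      using that \<open>d $ k \<le> 0\<close> p(2) by (simp add: mult_nonneg_nonpos)
  qed
  \<comment> \<open>D vanishes on a half space of directions, hence identically.\<close>
  have "D v = 0"
  proof (cases "v $ k \<le> 0")
    case False
    then have "D (- v) = 0" using inward[of "- v"] by simp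
    then show ?thesis using linear_neg[OF has_derivative_linear[OF D], of v] by simp
  qed (rule inward)
  then show ?thesis
    unfolding D_def dginv_def[symmetric] matrix_inv_metric_p sff_mat_derivative_v by (simp add: sum.distrib)
qed

lemma sff_p: "sff F N p x y = pd F [x, y] p \<bullet> N p"
  by (simp add: sff_def)

lemma dN_expansion: "pd N [u] p = (\<Sum>c\<in>tangent_onb. (- sff F N p u (\<tau> c)) *\<^sub>R L (\<tau> c))"
proof -
  have "pd N [u] p = (\<Sum>c\<in>ambient_onb. (c \<bullet> pd N [u] p) *\<^sub>R c)" by (rule ambient_expansion)
  also have "\<dots> = (N p \<bullet> pd N [u] p) *\<^sub>R N p + (\<Sum>c\<in>tangent_onb. (c \<bullet> pd N [u] p) *\<^sub>R c)"
    unfolding ambient_onb_def using finite_tangent_onb Np_notin_tangent_onb by simp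
  also have "(\<Sum>c\<in>tangent_onb. (c \<bullet> pd N [u] p) *\<^sub>R c)
      = (\<Sum>c\<in>tangent_onb. (- sff F N p u (\<tau> c)) *\<^sub>R L (\<tau> c))"
  proof (rule sum.cong[OF refl])
    fix c assume c: "c \<in> tangent_onb"
    have "L (\<tau> c) \<bullet> pd N [u] p = - sff F N p u (\<tau> c)"
      using Weingarten[OF p(1), of u "\<tau> c"] by (simp add: sff_p inner_commute)
    then show "(c \<bullet> pd N [u] p) *\<^sub>R c = (- sff F N p u (\<tau> c)) *\<^sub>R L (\<tau> c)" using L_\<tau>[OF c] by simp
  qed
  finally show ?thesis using N_orthogonal_dN[OF p(1)] by simp
qed

lemma inner_dN: "X \<bullet> pd N [u] p = - (\<Sum>c\<in>tangent_onb. sff F N p u (\<tau> c) * (X \<bullet> L (\<tau> c)))"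
  by (subst dN_expansion) (simp add: inner_sum_right sum_negf)

lemma sff_boundary_normal: "i \<in> boundary_onb \<Longrightarrow> sff F N p (\<tau> i) (\<tau> (F p)) = 0"
  using Weingarten[OF p(1), of "\<tau> i" v] boundary_dN_orthogonal_F[OF p \<tau>_boundary] v
  by (simp add: sff_p \<tau>_Fp inner_commute)

lemma ddF_boundary_normal: "i \<in> boundary_onb \<Longrightarrow> j \<in> boundary_onb \<Longrightarrow>
    pd F [\<tau> j, \<tau> i] p \<bullet> L (\<tau> (F p)) = (if i = j then -1 else 0)"
proof -
  assume i: "i \<in> boundary_onb" and j: "j \<in> boundary_onb"
  then have "i \<in> tangent_onb" "j \<in> tangent_onb" unfolding tangent_onb_def by auto
  then have "pd F [\<tau> j] p \<bullet> pd F [\<tau> i] p = (if j = i then 1 else 0)"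
    using L_\<tau> inner_tangent_onb by simp
  then show ?thesis
    using boundary_dF_dF[OF \<tau>_boundary[OF i] \<tau>_boundary[OF j]] v by (auto simp: \<tau>_Fp inner_commute)
qed

lemma dddF_boundary_normal: "i \<in> boundary_onb \<Longrightarrow> j \<in> boundary_onb \<Longrightarrow>
    N p \<bullet> pd F [\<tau> j, \<tau> i, \<tau> (F p)] p = - sff F N p (\<tau> i) (\<tau> j)
      + (\<Sum>c\<in>tangent_onb. sff F N p (\<tau> i) (\<tau> c) * (pd F [\<tau> j, \<tau> (F p)] p \<bullet> L (\<tau> c)))
      + (\<Sum>c\<in>tangent_onb. sff F N p (\<tau> j) (\<tau> c) * (pd F [\<tau> i, \<tau> (F p)] p \<bullet> L (\<tau> c)))"
proof -
  assume i: "i \<in> boundary_onb" and j: "j \<in> boundary_onb"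
  have "pd F [v] p = F p" using v by simp
  then show ?thesis
    using Weingarten_derivative[OF p(1), of "\<tau> j" "\<tau> i" v]
      boundary_ddN_F[OF \<tau>_boundary[OF i] \<tau>_boundary[OF j]] Weingarten[OF p(1), of "\<tau> i" "\<tau> j"]
      inner_dN[of "pd F [\<tau> j, v] p" "\<tau> i"] inner_dN[of "pd F [\<tau> i, v] p" "\<tau> j"]
    unfolding \<tau>_Fp sff_p by (simp add: inner_commute)
qed

lemma dsff_frame: "dsff (\<tau> a) (\<tau> b) = N p \<bullet> pd F [\<tau> (F p), \<tau> a, \<tau> b] p
    - (\<Sum>c\<in>tangent_onb. sff F N p (\<tau> (F p)) (\<tau> c) * (pd F [\<tau> a, \<tau> b] p \<bullet> L (\<tau> c)))"
  unfolding dsff_def \<tau>_Fp using inner_dN[of "pd F [\<tau> a, \<tau> b] p" v] by (simp add: inner_commute)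

lemma dmetric_frame: "dmetric (\<tau> a) (\<tau> b)
    = pd F [\<tau> (F p), \<tau> b] p \<bullet> L (\<tau> a) + pd F [\<tau> (F p), \<tau> a] p \<bullet> L (\<tau> b)"
  unfolding dmetric_def \<tau>_Fp by (simp add: inner_commute)

lemma trace_sff_frame: "(\<Sum>a\<in>tangent_onb. sff F N p (\<tau> a) (\<tau> a)) = 0"
proof -
  have "mean_curv F N p = (\<Sum>i\<in>UNIV. \<Sum>j\<in>UNIV. frame_ginv $ i $ j * sff_mat F N p $ i $ j)"
    by (simp add: mean_curv_eq matrix_inv_metric_p)
  also have "\<dots> = (\<Sum>a\<in>tangent_onb. sff F N p (\<tau> a) (\<tau> a))"
    by (simp add: contract_frame_ginv frame_comp_sff)
  finally show ?thesis using minimal p by simp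
qed

lemma trace_dsff_frame: "(\<Sum>a\<in>tangent_onb. \<Sum>b\<in>tangent_onb. dmetric (\<tau> a) (\<tau> b) * sff F N p (\<tau> a) (\<tau> b))
    = (\<Sum>a\<in>tangent_onb. dsff (\<tau> a) (\<tau> a))"
  using mean_curv_derivative_v
  by (simp add: contract_frame_ginv contract_dginv frame_comp_sff frame_comp_dsff sum_negf)

lemma normA2_frame: "normA2 F N p = (\<Sum>a\<in>tangent_onb. \<Sum>c\<in>tangent_onb. (sff F N p (\<tau> a) (\<tau> c))\<^sup>2)"
  by (simp add: normA2_eq matrix_inv_metric_p contract_frame_ginv_frame_ginv frame_comp_sff
      power2_eq_square)

lemma normA2_derivative_frame: "frechet_derivative (normA2 F N) (at p) v =
   - (\<Sum>a\<in>tangent_onb. \<Sum>b\<in>tangent_onb. dmetric (\<tau> a) (\<tau> b)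
        * (\<Sum>c\<in>tangent_onb. sff F N p (\<tau> a) (\<tau> c) * sff F N p (\<tau> b) (\<tau> c)))
   - (\<Sum>a\<in>tangent_onb. \<Sum>c\<in>tangent_onb. \<Sum>d\<in>tangent_onb. dmetric (\<tau> c) (\<tau> d)
        * (sff F N p (\<tau> a) (\<tau> c) * sff F N p (\<tau> a) (\<tau> d)))
   + 2 * (\<Sum>a\<in>tangent_onb. \<Sum>c\<in>tangent_onb. dsff (\<tau> a) (\<tau> c) * sff F N p (\<tau> a) (\<tau> c))"
  unfolding normA2_derivative_coords contract_dginv_frame_ginv contract_frame_ginv_dginv
    contract_frame_ginv_frame_ginv frame_comp_sff frame_comp_dsff
  by (simp add: sum_negf mult.commute[of "sff F N p _ _" "dsff _ _"])

theorem normA2_derivative_boundary: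
  "frechet_derivative (normA2 F N) (at p) v = - 2 * normA2 F N p - 2 * real CARD('n) * (sff F N p v v)\<^sup>2"
proof -
  interpret frame: boundary_frame_algebra boundary_onb "F p"
    "\<lambda>a b. sff F N p (\<tau> a) (\<tau> b)" "\<lambda>a b. dsff (\<tau> a) (\<tau> b)" "\<lambda>a b. dmetric (\<tau> a) (\<tau> b)"
    "\<lambda>a b c. pd F [\<tau> a, \<tau> b] p \<bullet> L (\<tau> c)" "\<lambda>a b c. N p \<bullet> pd F [\<tau> a, \<tau> b, \<tau> c] p"
  proof
    show "finite boundary_onb" "F p \<notin> boundary_onb"
      by (fact finite_boundary_onb Fp_notin_boundary_onb)+
    show "sff F N p (\<tau> a) (\<tau> b) = sff F N p (\<tau> b) (\<tau> a)" for a b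
      by (simp only: sff_p F_pd_swap[OF p(1)])
    show "pd F [\<tau> a, \<tau> b] p \<bullet> L (\<tau> c) = pd F [\<tau> b, \<tau> a] p \<bullet> L (\<tau> c)" for a b c
      by (simp only: F_pd_swap[OF p(1)])
    show "N p \<bullet> pd F [\<tau> a, \<tau> b, \<tau> c] p = N p \<bullet> pd F [\<tau> b, \<tau> a, \<tau> c] p"
      "N p \<bullet> pd F [\<tau> a, \<tau> b, \<tau> c] p = N p \<bullet> pd F [\<tau> a, \<tau> c, \<tau> b] p" for a b c
      by (simp_all only: smooth_on_pd_swap12[OF F_smooth U p(1)] smooth_on_pd_swap23[OF F_smooth U p(1)])
  qed (use dmetric_frame dsff_frame sff_boundary_normal ddF_boundary_normal dddF_boundary_normal
        trace_sff_frame trace_dsff_frame in \<open>simp_all only: tangent_onb_def\<close>)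
  have "sff F N p v v = sff F N p (\<tau> (F p)) (\<tau> (F p))" by (simp add: \<tau>_Fp)
  then show ?thesis
    using frame.derivative_identity card_tangent_onb
    unfolding normA2_derivative_frame normA2_frame tangent_onb_def by simp
qed

end

theorem proposition3p7:
  fixes F N :: "real^'n \<Rightarrow> real^'m" and U :: "(real^'n) set" and k :: 'n
  assumes dim: "CARD('m) = CARD('n) + 1"
    and U: "open U"
    and F_smooth: "smooth_on U F"
    and immersion: "\<forall>x\<in>U. inj (frechet_derivative F (at x))"
    and N_smooth: "smooth_on U N"
    and N_unit: "\<forall>x\<in>U. norm (N x) = 1"
    and N_normal: "\<forall>x\<in>U. \<forall>i. N x \<bullet> dF F x i = 0"
    and minimal: "\<forall>x\<in>U. x $ k \<le> 0 \<longrightarrow> mean_curv F N x = 0"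
    and bdry_sphere: "\<forall>x\<in>U. x $ k = 0 \<longrightarrow> norm (F x) = 1"
    and free_bdry: "\<forall>x\<in>U. x $ k = 0 \<longrightarrow> N x \<bullet> F x = 0"
    and p: "p \<in> U" "p $ k = 0"
    and v: "frechet_derivative F (at p) v = F p"
  shows "frechet_derivative (normA2 F N) (at p) v
           = - 2 * normA2 F N p - 2 * real CARD('n) * (sff F N p v v)\<^sup>2"
proof -
  interpret free_boundary_chart F N U k p v
    using assms by unfold_locales auto
  show ?thesis by (rule normA2_derivative_boundary)
qed

end
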